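(* The diagram $\mathcal D_c$ admits a lifting, with respect to the functor $\operatorname{Con}_c$, by a diagram of finite lattices and lattice embeddings.
   Context: Posets are viewed as categories (one morphism $p\to q$ iff $p\leq q$); a $P$-diagram in a category is a functor from $P$. $\operatorname{Con}_c$ is the functor sending a lattice $L$ to its $\{\vee,0\}$-semilattice of compact (finitely generated) congruences, and a lattice homomorphism $f\colon K\to L$ to the map sending a compact congruence $\alpha$ of $K$ to the congruence of $L$ generated by $\{(f(x),f(y)):(x,y)\in\alpha\}$. A $P$-diagram $\mathcal L$ of lattices lifts a $P$-diagram $\mathcal S$ of semilattices if $\operatorname{Con}_c\circ\mathcal L$ and $\mathcal S$ are naturally isomorphic. The diagram $\mathcal D_c$ is indexed by $\mathcal P(\{0,1,2\})$ ordered by inclusion. Let $U=\mathcal P(\{0,1,2,3,4\})$ with union and $\varnothing$. Put $\xi_0=\{0,4\},\xi_1=\{3\},\xi_2=\{2\},\xi_3=\{1,4\}$; $\eta_0=\{0,4\},\eta_1=\{1,4\},\eta_2=\{2\},\eta_3=\{3,4\}$; $\zeta_0=\{0,4\},\zeta_1=\{1\},\zeta_2=\{3\},\zeta_3=\{2,4\}$; $\alpha_0=\{0,1,4\},\beta_0=\{2,3,4\}$; $\alpha_1=\{0,3,4\},\beta_1=\{1,2,4\}$; $\alpha_2=\{0,2,4\},\beta_2=\{1,3,4\}$. Let $T_0$ (resp. $T_1$, $T_2$) be the $\{\vee,0\}$-subsemilattice of $U$ generated by the $\xi_j$ (resp. $\eta_j$, $\zeta_j$), $j<4$; $S_i$ ($i<3$)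 the one generated by $\{\alpha_i,\beta_i\}$; $\mathbf 2=\{\varnothing,\{0,1,2,3,4\}\}$. $\mathcal D_c$ assigns $\mathbf 2$ to $\varnothing$, $S_i$ to $\{i\}$, $T_j$ to $\{0,1,2\}\setminus\{j\}$, $U$ to $\{0,1,2\}$, with inclusion maps. *)

theory Defs
  imports Main
begin

record 'a latt =
  lcarrier :: "'a set"
  ljoin :: "'a \<Rightarrow> 'a \<Rightarrow> 'a"
  lmeet :: "'a \<Rightarrow> 'a \<Rightarrow> 'a"

definition is_lattice :: "('a, 'b) latt_scheme \<Rightarrow> bool" where
  "is_lattice L \<longleftrightarrow> lcarrier L \<noteq> {} \<and>
     (\<forall>x\<in>lcarrier L. \<forall>y\<in>lcarrier L.
        ljoin L x y \<in> lcarrier L \<and> lmeet L x y \<in> lcarrier L \<and>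
        ljoin L x y = ljoin L y x \<and> lmeet L x y = lmeet L y x \<and>
        ljoin L x (lmeet L x y) = x \<and> lmeet L x (ljoin L x y) = x) \<and>
     (\<forall>x\<in>lcarrier L. \<forall>y\<in>lcarrier L. \<forall>z\<in>lcarrier L.
        ljoin L (ljoin L x y) z = ljoin L x (ljoin L y z) \<and>
        lmeet L (lmeet L x y) z = lmeet L x (lmeet L y z))"

definition lattice_hom :: "('a, 'b) latt_scheme \<Rightarrow> ('c, 'd) latt_scheme \<Rightarrow> ('a \<Rightarrow> 'c) \<Rightarrow> bool" where
  "lattice_hom K L f \<longleftrightarrow> f ` lcarrier K \<subseteq> lcarrier L \<and>
     (\<forall>x\<in>lcarrier K. \<forall>y\<in>lcarrier K.
        f (ljoin K x y) = ljoin L (f x) (f y) \<and> f (lmeet K x y) = lmeet L (f x) (f y))"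

definition lattice_embedding :: "('a, 'b) latt_scheme \<Rightarrow> ('c, 'd) latt_scheme \<Rightarrow> ('a \<Rightarrow> 'c) \<Rightarrow> bool" where
  "lattice_embedding K L f \<longleftrightarrow> lattice_hom K L f \<and> inj_on f (lcarrier K)"

definition lcongruence :: "('a, 'b) latt_scheme \<Rightarrow> ('a \<times> 'a) set \<Rightarrow> bool" where
  "lcongruence L \<theta> \<longleftrightarrow> equiv (lcarrier L) \<theta> \<and>
     (\<forall>x y u v. (x, y) \<in> \<theta> \<longrightarrow> (u, v) \<in> \<theta> \<longrightarrow>
        (ljoin L x u, ljoin L y v) \<in> \<theta> \<and> (lmeet L x u, lmeet L y v) \<in> \<theta>)"

definition Cg :: "('a, 'b) latt_scheme \<Rightarrow> ('a \<times> 'a) set \<Rightarrow> ('a \<times> 'a) set" where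
  "Cg L R = \<Inter> {\<theta>. lcongruence L \<theta> \<and> R \<subseteq> \<theta>}"

text \<open>Compact (= finitely generated) congruences.\<close>
definition Con_c :: "('a, 'b) latt_scheme \<Rightarrow> ('a \<times> 'a) set set" where
  "Con_c L = {Cg L F | F. finite F \<and> F \<subseteq> lcarrier L \<times> lcarrier L}"

definition con_join :: "('a, 'b) latt_scheme \<Rightarrow> ('a \<times> 'a) set \<Rightarrow> ('a \<times> 'a) set \<Rightarrow> ('a \<times> 'a) set" where
  "con_join L \<alpha> \<beta> = Cg L (\<alpha> \<union> \<beta>)"

definition con_zero :: "('a, 'b) latt_scheme \<Rightarrow> ('a \<times> 'a) set" where
  "con_zero L = Id_on (lcarrier L)"

definition Con_c_map :: "('c, 'd) latt_scheme \<Rightarrow> ('a \<Rightarrow> 'c) \<Rightarrow> ('a \<times> 'a) set \<Rightarrow> ('c \<times> 'c) set" where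
  "Con_c_map L f \<alpha> = Cg L ((\<lambda>(x, y). (f x, f y)) ` \<alpha>)"

text \<open>The {\<or>,0}-subsemilattice of (Pow {0..4}, \<union>, {}) generated by G.\<close>
definition gen_sl :: "nat set set \<Rightarrow> nat set set" where
  "gen_sl G = {\<Union> F | F. F \<subseteq> G}"

definition U_sl :: "nat set set" where
  "U_sl = Pow {0,1,2,3,4}"

definition two_sl :: "nat set set" where
  "two_sl = {{}, {0,1,2,3,4}}"

definition xi_gens :: "nat set list" where
  "xi_gens = [{0,4}, {3}, {2}, {1,4}]"

definition eta_gens :: "nat set list" where
  "eta_gens = [{0,4}, {1,4}, {2}, {3,4}]"

definition zeta_gens :: "nat set list" where
  "zeta_gens = [{0,4}, {1}, {3}, {2,4}]"

definition T_sl :: "nat \<Rightarrow> nat set set" where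
  "T_sl j = gen_sl (set ([xi_gens, eta_gens, zeta_gens] ! j))"

definition S_sl :: "nat \<Rightarrow> nat set set" where
  "S_sl i = gen_sl (set ([[{0,1,4}, {2,3,4}], [{0,3,4}, {1,2,4}], [{0,2,4}, {1,3,4}]] ! i))"

text \<open>D_c on an index p \<subseteq> {0,1,2}; all transition maps are inclusions.\<close>
definition Dc :: "nat set \<Rightarrow> nat set set" where
  "Dc p = (if p = {} then two_sl
           else if p = {0,1,2} then U_sl
           else if card p = 1 then S_sl (the_elem p)
           else T_sl (the_elem ({0,1,2} - p)))"

definition lattice_diagram :: "(nat set \<Rightarrow> ('a, 'b) latt_scheme) \<Rightarrow> (nat set \<Rightarrow> nat set \<Rightarrow> 'a \<Rightarrow> 'a) \<Rightarrow> bool" where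
  "lattice_diagram L f \<longleftrightarrow>
     (\<forall>p. p \<subseteq> {0,1,2} \<longrightarrow> is_lattice (L p)) \<and>
     (\<forall>p q. p \<subseteq> q \<and> q \<subseteq> {0,1,2} \<longrightarrow> lattice_hom (L p) (L q) (f p q)) \<and>
     (\<forall>p. p \<subseteq> {0,1,2} \<longrightarrow> (\<forall>x\<in>lcarrier (L p). f p p x = x)) \<and>
     (\<forall>p q r. p \<subseteq> q \<and> q \<subseteq> r \<and> r \<subseteq> {0,1,2} \<longrightarrow>
        (\<forall>x\<in>lcarrier (L p). f p r x = f q r (f p q x)))"

text \<open>Con_c \<circ> (L,f) is naturally isomorphic to D_c (whose arrows are inclusions):
  a family of {\<or>,0}-semilattice isomorphisms \<phi> p : Con_c (L p) \<rightarrow> Dc p, natural in p.\<close>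
definition lifts_Dc :: "(nat set \<Rightarrow> ('a, 'b) latt_scheme) \<Rightarrow> (nat set \<Rightarrow> nat set \<Rightarrow> 'a \<Rightarrow> 'a) \<Rightarrow> bool" where
  "lifts_Dc L f \<longleftrightarrow>
     (\<exists>\<phi> :: nat set \<Rightarrow> ('a \<times> 'a) set \<Rightarrow> nat set.
        (\<forall>p. p \<subseteq> {0,1,2} \<longrightarrow>
           bij_betw (\<phi> p) (Con_c (L p)) (Dc p) \<and>
           \<phi> p (con_zero (L p)) = {} \<and>
           (\<forall>\<alpha>\<in>Con_c (L p). \<forall>\<beta>\<in>Con_c (L p).
              \<phi> p (con_join (L p) \<alpha> \<beta>) = \<phi> p \<alpha> \<union> \<phi> p \<beta>)) \<and>
        (\<forall>p q. p \<subseteq> q \<and> q \<subseteq> {0,1,2} \<longrightarrow>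
           (\<forall>\<alpha>\<in>Con_c (L p). \<phi> q (Con_c_map (L q) (f p q) \<alpha>) = \<phi> p \<alpha>)))"

end

theory Submission
  imports Defs
begin

text \<open>Let \<open>G\<close> be the nine-element simple lattice obtained from the cube \<open>2\<^sup>3\<close> by adding one element
  strictly between its bounds, and \<open>U = 2\<^sup>4 \<times> G\<close>. A congruence of a finite direct product of simple
  lattices is determined by its support, the set of coordinates on which it identifies distinct values,
  so the support map is a \<open>{\<or>, 0}\<close>-isomorphism from \<open>Con\<^sub>c U\<close> onto \<open>P({0, ..., 4})\<close>. Supports still
  determine congruences on a two-element chain, on three-element chains \<open>0 < m\<^sub>i < 1\<close> and on three
  copies of \<open>2\<^sup>4\<close> inside \<open>U\<close> whose coordinate \<open>4\<close> is the image, under a lattice embedding into \<open>G\<close>, of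
  the coordinates in a fixed subset of \<open>{0, ..., 3}\<close>. Placing these lattices at the vertices of the
  cube, with inclusions as maps, the supports of their compact congruences form exactly the
  semilattices of \<open>D\<^sub>c\<close>, and taking supports commutes with the inclusions.\<close>

lemma is_latticeD:
  assumes "is_lattice L" "x \<in> lcarrier L" "y \<in> lcarrier L"
  shows "ljoin L x y \<in> lcarrier L" "lmeet L x y \<in> lcarrier L"
    and "ljoin L x y = ljoin L y x" "lmeet L x y = lmeet L y x"
    and "ljoin L x (lmeet L x y) = x" "lmeet L x (ljoin L x y) = x"
  using assms unfolding is_lattice_def by blast+

lemma is_lattice_assoc:
  assumes "is_lattice L" "x \<in> lcarrier L" "y \<in> lcarrier L" "z \<in> lcarrier L"
  shows "ljoin L (ljoin L x y) z = ljoin L x (ljoin L y z)"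
    and "lmeet L (lmeet L x y) z = lmeet L x (lmeet L y z)"
  using assms unfolding is_lattice_def by blast+

lemma lattice_idem:
  assumes "is_lattice L" "x \<in> lcarrier L"
  shows "ljoin L x x = x" "lmeet L x x = x"
proof -
  have "ljoin L x x = ljoin L x (lmeet L x (ljoin L x x))"
    using is_latticeD[OF assms assms(2)] by simp
  also have "\<dots> = x"
    using is_latticeD(1,5)[OF assms is_latticeD(1)[OF assms assms(2)]] by simp
  finally show "ljoin L x x = x" .
  have "lmeet L x x = lmeet L x (ljoin L x (lmeet L x x))"
    using is_latticeD[OF assms assms(2)] by simp
  also have "\<dots> = x"
    using is_latticeD(2,6)[OF assms is_latticeD(2)[OF assms assms(2)]] by simp
  finally show "lmeet L x x = x" .
qed

lemma lattice_absorb_right: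
  assumes L: "is_lattice L" and x: "x \<in> lcarrier L" and y: "y \<in> lcarrier L"
  shows "lmeet L (ljoin L y x) x = x" "ljoin L (lmeet L y x) x = x"
proof -
  have "lmeet L (ljoin L y x) x = lmeet L x (ljoin L x y)"
    using is_latticeD(1,3,4)[OF L] x y by metis
  also have "\<dots> = x" using is_latticeD(6)[OF L x y] .
  finally show "lmeet L (ljoin L y x) x = x" .
  have "ljoin L (lmeet L y x) x = ljoin L x (lmeet L x y)"
    using is_latticeD(2,3,4)[OF L] x y by metis
  also have "\<dots> = x" using is_latticeD(5)[OF L x y] .
  finally show "ljoin L (lmeet L y x) x = x" .
qed

lemma lattice_retract_interval:
  assumes L: "is_lattice L" and u: "u \<in> lcarrier L" and v: "v \<in> lcarrier L" and w: "w \<in> {u, v}"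
  shows "lmeet L (ljoin L w (lmeet L u v)) (ljoin L u v) = w"
proof -
  have "ljoin L w (lmeet L u v) = w \<and> lmeet L w (ljoin L u v) = w"
    using w is_latticeD[OF L u v] is_latticeD(5,6)[OF L v u] by auto
  then show ?thesis by simp
qed

lemma is_lattice_subdirect:
  assumes nonempty: "lcarrier L \<noteq> {}"
    and closed: "\<And>x y. x \<in> lcarrier L \<Longrightarrow> y \<in> lcarrier L \<Longrightarrow>
                   ljoin L x y \<in> lcarrier L \<and> lmeet L x y \<in> lcarrier L"
    and factors: "\<And>c. c \<in> I \<Longrightarrow> is_lattice (F c)"
    and hom: "\<And>c. c \<in> I \<Longrightarrow> lattice_hom L (F c) (\<pi> c)"
    and sep: "\<And>x y. x \<in> lcarrier L \<Longrightarrow> y \<in> lcarrier L \<Longrightarrow> (\<And>c. c \<in> I \<Longrightarrow> \<pi> c x = \<pi> c y) \<Longrightarrow> x = y"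
  shows "is_lattice L"
proof -
  have \<pi>: "\<pi> c x \<in> lcarrier (F c)"
    "\<pi> c (ljoin L x y) = ljoin (F c) (\<pi> c x) (\<pi> c y)"
    "\<pi> c (lmeet L x y) = lmeet (F c) (\<pi> c x) (\<pi> c y)"
    if "c \<in> I" "x \<in> lcarrier L" "y \<in> lcarrier L" for c x y
    using hom[OF that(1)] that(2,3) unfolding lattice_hom_def by auto
  have binary: "ljoin L x y = ljoin L y x \<and> lmeet L x y = lmeet L y x \<and>
      ljoin L x (lmeet L x y) = x \<and> lmeet L x (ljoin L x y) = x"
    if "x \<in> lcarrier L" "y \<in> lcarrier L" for x y
    by (intro conjI; rule sep) (use that closed in \<open>simp_all add: \<pi> is_latticeD[OF factors]\<close>)
  have ternary: "ljoin L (ljoin L x y) z = ljoin L x (ljoin L y z) \<and>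
      lmeet L (lmeet L x y) z = lmeet L x (lmeet L y z)"
    if "x \<in> lcarrier L" "y \<in> lcarrier L" "z \<in> lcarrier L" for x y z
    by (intro conjI; rule sep)
      (use that closed in \<open>simp_all add: \<pi> is_latticeD(1,2)[OF factors] is_lattice_assoc[OF factors]\<close>)
  show ?thesis
    unfolding is_lattice_def using nonempty closed binary ternary by blast
qed

lemma lcongruenceD:
  assumes "lcongruence L \<theta>"
  shows "\<theta> \<subseteq> lcarrier L \<times> lcarrier L"
    and "x \<in> lcarrier L \<Longrightarrow> (x, x) \<in> \<theta>"
    and "(x, y) \<in> \<theta> \<Longrightarrow> (y, x) \<in> \<theta>"
    and "(x, y) \<in> \<theta> \<Longrightarrow> (y, z) \<in> \<theta> \<Longrightarrow> (x, z) \<in> \<theta>"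
    and "(x, y) \<in> \<theta> \<Longrightarrow> (u, v) \<in> \<theta> \<Longrightarrow> (ljoin L x u, ljoin L y v) \<in> \<theta>"
    and "(x, y) \<in> \<theta> \<Longrightarrow> (u, v) \<in> \<theta> \<Longrightarrow> (lmeet L x u, lmeet L y v) \<in> \<theta>"
  using assms unfolding lcongruence_def equiv_def refl_on_def sym_def trans_def by blast+

lemma lcongruenceI:
  assumes "\<theta> \<subseteq> lcarrier L \<times> lcarrier L"
    and "\<And>x. x \<in> lcarrier L \<Longrightarrow> (x, x) \<in> \<theta>"
    and "\<And>x y. (x, y) \<in> \<theta> \<Longrightarrow> (y, x) \<in> \<theta>"
    and "\<And>x y z. (x, y) \<in> \<theta> \<Longrightarrow> (y, z) \<in> \<theta> \<Longrightarrow> (x, z) \<in> \<theta>"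
    and "\<And>x y u v. (x, y) \<in> \<theta> \<Longrightarrow> (u, v) \<in> \<theta> \<Longrightarrow>
           (ljoin L x u, ljoin L y v) \<in> \<theta> \<and> (lmeet L x u, lmeet L y v) \<in> \<theta>"
  shows "lcongruence L \<theta>"
  using assms unfolding lcongruence_def equiv_def refl_on_def sym_def trans_def by blast

lemma lcongruence_Inter:
  assumes "\<Theta> \<noteq> {}" "\<And>\<theta>. \<theta> \<in> \<Theta> \<Longrightarrow> lcongruence L \<theta>"
  shows "lcongruence L (\<Inter>\<Theta>)"
proof (rule lcongruenceI)
  show "\<Inter>\<Theta> \<subseteq> lcarrier L \<times> lcarrier L"
    using assms lcongruenceD(1) by blast
qed (blast intro: lcongruenceD[OF assms(2)])+

lemma Cg_upper: "R \<subseteq> Cg L R"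
  unfolding Cg_def by blast

lemma Cg_least: "lcongruence L \<theta> \<Longrightarrow> R \<subseteq> \<theta> \<Longrightarrow> Cg L R \<subseteq> \<theta>"
  unfolding Cg_def by blast

lemma lcongruence_Cg:
  assumes "is_lattice L" "R \<subseteq> lcarrier L \<times> lcarrier L"
  shows "lcongruence L (Cg L R)"
proof -
  have "lcongruence L (lcarrier L \<times> lcarrier L)"
    by (rule lcongruenceI) (use is_latticeD(1,2)[OF assms(1)] in auto)
  then show ?thesis
    unfolding Cg_def using assms(2) by (intro lcongruence_Inter) auto
qed

lemma lcongruence_convex:
  assumes L: "is_lattice L" and \<theta>: "lcongruence L \<theta>" and ac: "(a, c) \<in> \<theta>"
    and b: "b \<in> lcarrier L" and ab: "ljoin L a b = b" and bc: "ljoin L b c = c"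
  shows "(a, b) \<in> \<theta>" "(b, c) \<in> \<theta>"
proof -
  have a: "a \<in> lcarrier L" and c: "c \<in> lcarrier L"
    using ac lcongruenceD(1)[OF \<theta>] by auto
  have "lmeet L a b = a"
    using is_latticeD(6)[OF L a b] ab by simp
  moreover have "lmeet L c b = b"
    using is_latticeD(4,6)[OF L b c] bc by simp
  ultimately show "(a, b) \<in> \<theta>"
    using lcongruenceD(6)[OF \<theta> ac lcongruenceD(2)[OF \<theta> b]] by simp
  have "ljoin L c b = c"
    using is_latticeD(3)[OF L b c] bc by simp
  then show "(b, c) \<in> \<theta>"
    using lcongruenceD(5)[OF \<theta> ac lcongruenceD(2)[OF \<theta> b]] ab by simp
qed

lemma chain3_congruence:
  assumes L: "is_lattice L" and \<theta>: "lcongruence L \<theta>" and carrier: "lcarrier L = {a, b, c}"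
    and order: "ljoin L a b = b" "ljoin L b c = c"
    and \<kappa>: "\<kappa> a \<noteq> \<kappa> b" "\<kappa> b = \<kappa> c" and \<mu>: "\<mu> a = \<mu> b" "\<mu> b \<noteq> \<mu> c"
    and xy: "x \<in> lcarrier L" "y \<in> lcarrier L"
    and collapsed: "\<kappa> x \<noteq> \<kappa> y \<Longrightarrow> \<exists>(u, v)\<in>\<theta>. \<kappa> u \<noteq> \<kappa> v"
      "\<mu> x \<noteq> \<mu> y \<Longrightarrow> \<exists>(u, v)\<in>\<theta>. \<mu> u \<noteq> \<mu> v"
  shows "(x, y) \<in> \<theta>"
proof -
  have convex: "(a, b) \<in> \<theta> \<and> (b, c) \<in> \<theta>" if "(a, c) \<in> \<theta>"
    using lcongruence_convex[OF L \<theta> that _ order] carrier by simp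
  note sym = lcongruenceD(3)[OF \<theta>]
  have ab: "(a, b) \<in> \<theta>" if diff: "\<kappa> x \<noteq> \<kappa> y"
  proof -
    obtain u v where uv: "(u, v) \<in> \<theta>" "\<kappa> u \<noteq> \<kappa> v" using collapsed(1)[OF diff] by blast
    then have "(u, v) \<in> {(a, b), (b, a), (a, c), (c, a)}"
      using lcongruenceD(1)[OF \<theta>] carrier \<kappa> by auto
    then show ?thesis using uv(1) convex sym by blast
  qed
  have bc: "(b, c) \<in> \<theta>" if diff: "\<mu> x \<noteq> \<mu> y"
  proof -
    obtain u v where uv: "(u, v) \<in> \<theta>" "\<mu> u \<noteq> \<mu> v" using collapsed(2)[OF diff] by blast
    then have "(u, v) \<in> {(b, c), (c, b), (a, c), (c, a)}"
      using lcongruenceD(1)[OF \<theta>] carrier \<mu> by auto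
    then show ?thesis using uv(1) convex sym by blast
  qed
  have "x = y \<or> (x, y) \<in> {(a, b), (b, a)} \<or> (x, y) \<in> {(b, c), (c, b)} \<or> (x, y) \<in> {(a, c), (c, a)}"
    using xy carrier by auto
  then show ?thesis
  proof (elim disjE)
    assume "x = y"
    then show ?thesis using lcongruenceD(2)[OF \<theta> xy(1)] by simp
  next
    assume "(x, y) \<in> {(a, b), (b, a)}"
    then show ?thesis using ab \<kappa> sym by auto
  next
    assume "(x, y) \<in> {(b, c), (c, b)}"
    then show ?thesis using bc \<mu> sym by auto
  next
    assume xy_ac: "(x, y) \<in> {(a, c), (c, a)}"
    then have "(a, c) \<in> \<theta>"
      using ab bc \<kappa> \<mu> lcongruenceD(4)[OF \<theta>] by auto
    then show ?thesis using xy_ac sym by auto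
  qed
qed

section \<open>Congruences of direct products of simple lattices\<close>

definition simple_lattice :: "('a, 'b) latt_scheme \<Rightarrow> bool" where
  "simple_lattice L \<longleftrightarrow>
     (\<forall>\<theta>. lcongruence L \<theta> \<longrightarrow> \<theta> = con_zero L \<or> \<theta> = lcarrier L \<times> lcarrier L)"

lemma simple_latticeI:
  assumes "\<And>\<theta> g h. lcongruence L \<theta> \<Longrightarrow> (g, h) \<in> \<theta> \<Longrightarrow> g \<noteq> h \<Longrightarrow>
             lcarrier L \<times> lcarrier L \<subseteq> \<theta>"
  shows "simple_lattice L"
  unfolding simple_lattice_def con_zero_def
proof (intro allI impI)
  fix \<theta> assume \<theta>: "lcongruence L \<theta>"
  show "\<theta> = Id_on (lcarrier L) \<or> \<theta> = lcarrier L \<times> lcarrier L"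
  proof (cases "\<exists>(g, h)\<in>\<theta>. g \<noteq> h")
    case True
    then show ?thesis using assms[OF \<theta>] lcongruenceD(1)[OF \<theta>] by blast
  next
    case False
    then show ?thesis using lcongruenceD(1,2)[OF \<theta>] by (auto simp: Id_on_def)
  qed
qed

lemma simple_latticeD:
  assumes "simple_lattice L" "lcongruence L \<theta>" "(g, h) \<in> \<theta>" "g \<noteq> h"
  shows "\<theta> = lcarrier L \<times> lcarrier L"
  using assms unfolding simple_lattice_def con_zero_def by blast

lemma simple_lattice_doubleton:
  assumes "lcarrier L = {a, b}"
  shows "simple_lattice L"
proof (rule simple_latticeI)
  fix \<theta> g h assume \<theta>: "lcongruence L \<theta>" and gh: "(g, h) \<in> \<theta>" "g \<noteq> h"
  then have "{g, h} = {a, b}" using lcongruenceD(1)[OF \<theta>] assms by auto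
  then show "lcarrier L \<times> lcarrier L \<subseteq> \<theta>"
    using assms gh lcongruenceD(2,3)[OF \<theta>] by (auto simp: doubleton_eq_iff)
qed

locale lattice_product =
  fixes L :: "('a, 'b) latt_scheme" and I :: "'i set"
    and F :: "'i \<Rightarrow> ('c, 'd) latt_scheme" and \<pi> :: "'i \<Rightarrow> 'a \<Rightarrow> 'c"
  assumes lattice: "is_lattice L"
    and finite_index: "finite I"
    and proj_hom: "c \<in> I \<Longrightarrow> lattice_hom L (F c) (\<pi> c)"
    and proj_sep: "\<lbrakk>x \<in> lcarrier L; y \<in> lcarrier L; \<And>c. c \<in> I \<Longrightarrow> \<pi> c x = \<pi> c y\<rbrakk> \<Longrightarrow> x = y"
    and proj_update: "\<lbrakk>x \<in> lcarrier L; c \<in> I; g \<in> lcarrier (F c)\<rbrakk> \<Longrightarrow>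
      \<exists>z\<in>lcarrier L. \<pi> c z = g \<and> (\<forall>c'\<in>I - {c}. \<pi> c' z = \<pi> c' x)"
begin

lemma proj:
  assumes "c \<in> I" "x \<in> lcarrier L" "y \<in> lcarrier L"
  shows "\<pi> c x \<in> lcarrier (F c)"
    and "\<pi> c (ljoin L x y) = ljoin (F c) (\<pi> c x) (\<pi> c y)"
    and "\<pi> c (lmeet L x y) = lmeet (F c) (\<pi> c x) (\<pi> c y)"
  using proj_hom[OF assms(1)] assms(2,3) unfolding lattice_hom_def by auto

definition fiber :: "'i \<Rightarrow> 'a \<Rightarrow> 'a set" where
  "fiber c z = {w \<in> lcarrier L. \<forall>c'\<in>I - {c}. \<pi> c' w = \<pi> c' z}"

lemma fiber_carrier: "w \<in> fiber c z \<Longrightarrow> w \<in> lcarrier L"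
  by (simp add: fiber_def)

lemma fiber_proj_inj:
  assumes "c \<in> I" "w \<in> fiber c z" "w' \<in> fiber c z" "\<pi> c w = \<pi> c w'"
  shows "w = w'"
proof (rule proj_sep)
  fix c' assume "c' \<in> I"
  then show "\<pi> c' w = \<pi> c' w'" using assms unfolding fiber_def by (cases "c' = c") auto
qed (use assms in \<open>simp_all add: fiber_def\<close>)

lemma fiber_proj_onto:
  "\<lbrakk>z \<in> lcarrier L; c \<in> I; g \<in> lcarrier (F c)\<rbrakk> \<Longrightarrow> \<exists>w\<in>fiber c z. \<pi> c w = g"
  using proj_update unfolding fiber_def by blast

lemma fiber_ops:
  assumes z: "z \<in> lcarrier L" and w: "w \<in> fiber c z" "w' \<in> fiber c z"
  shows "ljoin L w w' \<in> fiber c z" "lmeet L w w' \<in> fiber c z"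
proof -
  have L: "w \<in> lcarrier L" "w' \<in> lcarrier L" using w by (simp_all add: fiber_def)
  have "\<pi> c' (ljoin L w w') = \<pi> c' (ljoin L z z) \<and> \<pi> c' (lmeet L w w') = \<pi> c' (lmeet L z z)"
    if "c' \<in> I - {c}" for c'
    using that w L z unfolding fiber_def by (simp add: proj)
  then show "ljoin L w w' \<in> fiber c z" "lmeet L w w' \<in> fiber c z"
    unfolding fiber_def using is_latticeD(1,2)[OF lattice L] lattice_idem[OF lattice z] by auto
qed

lemma fiber_retract:
  assumes z: "z \<in> lcarrier L" and w: "w \<in> lcarrier L" and mn: "m \<in> fiber c z" "n \<in> fiber c z"
  shows "lmeet L (ljoin L w m) n \<in> fiber c z"
proof -
  have m: "m \<in> lcarrier L" and n: "n \<in> lcarrier L" using mn by (simp_all add: fiber_def)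
  have wm: "ljoin L w m \<in> lcarrier L" and wz: "ljoin L w z \<in> lcarrier L"
    using is_latticeD(1)[OF lattice] w m z by auto
  have "\<pi> c' (lmeet L (ljoin L w m) n) = \<pi> c' (lmeet L (ljoin L w z) z)" if c': "c' \<in> I - {c}" for c'
    using c' mn w m n wm z wz unfolding fiber_def by (simp add: proj)
  then show ?thesis
    unfolding fiber_def using lattice_absorb_right(1)[OF lattice z w] is_latticeD(2)[OF lattice wm n] by simp
qed

definition fiber_congruence :: "('a \<times> 'a) set \<Rightarrow> 'i \<Rightarrow> 'a \<Rightarrow> ('c \<times> 'c) set" where
  "fiber_congruence \<theta> c z = (\<lambda>(w, w'). (\<pi> c w, \<pi> c w')) ` (\<theta> \<inter> fiber c z \<times> fiber c z)"

lemma fiber_congruenceE: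
  assumes "(g, h) \<in> fiber_congruence \<theta> c z"
  obtains w w' where "(w, w') \<in> \<theta>" "w \<in> fiber c z" "w' \<in> fiber c z" "\<pi> c w = g" "\<pi> c w' = h"
  using assms unfolding fiber_congruence_def by auto

lemma fiber_congruenceI:
  "\<lbrakk>(w, w') \<in> \<theta>; w \<in> fiber c z; w' \<in> fiber c z\<rbrakk> \<Longrightarrow> (\<pi> c w, \<pi> c w') \<in> fiber_congruence \<theta> c z"
  unfolding fiber_congruence_def by force

lemma fiber_congruence_compat:
  assumes \<theta>: "lcongruence L \<theta>" and c: "c \<in> I" and z: "z \<in> lcarrier L"
    and gh: "(g, h) \<in> fiber_congruence \<theta> c z" "(g', h') \<in> fiber_congruence \<theta> c z"
  shows "(ljoin (F c) g g', ljoin (F c) h h') \<in> fiber_congruence \<theta> c z"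
    and "(lmeet (F c) g g', lmeet (F c) h h') \<in> fiber_congruence \<theta> c z"
proof -
  obtain w1 w2 w3 w4 where w: "(w1, w2) \<in> \<theta>" "w1 \<in> fiber c z" "w2 \<in> fiber c z" "\<pi> c w1 = g" "\<pi> c w2 = h"
    and w': "(w3, w4) \<in> \<theta>" "w3 \<in> fiber c z" "w4 \<in> fiber c z" "\<pi> c w3 = g'" "\<pi> c w4 = h'"
    using gh by (elim fiber_congruenceE)
  have L: "w1 \<in> lcarrier L" "w2 \<in> lcarrier L" "w3 \<in> lcarrier L" "w4 \<in> lcarrier L"
    using w w' fiber_carrier by blast+
  have "(\<pi> c (ljoin L w1 w3), \<pi> c (ljoin L w2 w4)) \<in> fiber_congruence \<theta> c z"
    by (rule fiber_congruenceI[OF lcongruenceD(5)[OF \<theta> w(1) w'(1)] fiber_ops(1)[OF z w(2) w'(2)]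
          fiber_ops(1)[OF z w(3) w'(3)]])
  then show "(ljoin (F c) g g', ljoin (F c) h h') \<in> fiber_congruence \<theta> c z"
    using proj(2)[OF c] L w(4,5) w'(4,5) by simp
  have "(\<pi> c (lmeet L w1 w3), \<pi> c (lmeet L w2 w4)) \<in> fiber_congruence \<theta> c z"
    by (rule fiber_congruenceI[OF lcongruenceD(6)[OF \<theta> w(1) w'(1)] fiber_ops(2)[OF z w(2) w'(2)]
          fiber_ops(2)[OF z w(3) w'(3)]])
  then show "(lmeet (F c) g g', lmeet (F c) h h') \<in> fiber_congruence \<theta> c z"
    using proj(3)[OF c] L w(4,5) w'(4,5) by simp
qed

lemma lcongruence_fiber_congruence:
  assumes \<theta>: "lcongruence L \<theta>" and c: "c \<in> I" and z: "z \<in> lcarrier L"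
  shows "lcongruence (F c) (fiber_congruence \<theta> c z)"
proof (rule lcongruenceI)
  show "fiber_congruence \<theta> c z \<subseteq> lcarrier (F c) \<times> lcarrier (F c)"
  proof (rule subrelI)
    fix g h assume "(g, h) \<in> fiber_congruence \<theta> c z"
    then obtain w w' where "w \<in> fiber c z" "w' \<in> fiber c z" "\<pi> c w = g" "\<pi> c w' = h"
      by (rule fiber_congruenceE)
    then show "(g, h) \<in> lcarrier (F c) \<times> lcarrier (F c)"
      using proj(1)[OF c fiber_carrier fiber_carrier] by blast
  qed
next
  fix g assume "g \<in> lcarrier (F c)"
  then obtain w where w: "w \<in> fiber c z" "\<pi> c w = g" using fiber_proj_onto[OF z c] by blast
  have "(w, w) \<in> \<theta>" using lcongruenceD(2)[OF \<theta> fiber_carrier[OF w(1)]] .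
  from fiber_congruenceI[OF this w(1) w(1)] show "(g, g) \<in> fiber_congruence \<theta> c z"
    unfolding w(2) .
next
  fix g h assume "(g, h) \<in> fiber_congruence \<theta> c z"
  then obtain w w' where w: "(w, w') \<in> \<theta>" "w \<in> fiber c z" "w' \<in> fiber c z" "\<pi> c w = g" "\<pi> c w' = h"
    by (rule fiber_congruenceE)
  from fiber_congruenceI[OF lcongruenceD(3)[OF \<theta> w(1)] w(3,2)] show "(h, g) \<in> fiber_congruence \<theta> c z"
    unfolding w(4,5) .
next
  fix g h k assume "(g, h) \<in> fiber_congruence \<theta> c z" "(h, k) \<in> fiber_congruence \<theta> c z"
  then obtain w1 w2 w3 w4 where w: "(w1, w2) \<in> \<theta>" "w1 \<in> fiber c z" "w2 \<in> fiber c z" "\<pi> c w1 = g" "\<pi> c w2 = h"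
    and w': "(w3, w4) \<in> \<theta>" "w3 \<in> fiber c z" "w4 \<in> fiber c z" "\<pi> c w3 = h" "\<pi> c w4 = k"
    by (elim fiber_congruenceE)
  have "w2 = w3" using fiber_proj_inj[OF c w(3) w'(2)] w(5) w'(4) by simp
  then have "(w1, w4) \<in> \<theta>" using lcongruenceD(4)[OF \<theta> w(1)] w'(1) by simp
  from fiber_congruenceI[OF this w(2) w'(3)] show "(g, k) \<in> fiber_congruence \<theta> c z"
    unfolding w(4) w'(5) .
qed (use fiber_congruence_compat[OF assms] in blast)

text \<open>If \<open>\<theta>\<close> identifies two elements differing at \<open>c\<close>, then the congruence it induces on the fibre
  through \<open>z\<close> is not trivial: the polynomial \<open>w \<mapsto> (w \<or> m) \<and> n\<close>, with \<open>m, n\<close> in the fibre at the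
  heights of \<open>u \<and> v\<close> and \<open>u \<or> v\<close>, moves \<open>u\<close> and \<open>v\<close> into the fibre without changing their
  \<open>c\<close>-coordinates. By simplicity of \<open>F c\<close> the whole fibre then collapses.\<close>

lemma fiber_collapse:
  assumes \<theta>: "lcongruence L \<theta>" and c: "c \<in> I" and simple: "simple_lattice (F c)"
    and uv: "(u, v) \<in> \<theta>" "\<pi> c u \<noteq> \<pi> c v"
    and z: "z \<in> lcarrier L" and z': "z' \<in> fiber c z"
  shows "(z, z') \<in> \<theta>"
proof -
  have u: "u \<in> lcarrier L" and v: "v \<in> lcarrier L" using uv(1) lcongruenceD(1)[OF \<theta>] by auto
  obtain m where m: "m \<in> fiber c z" "\<pi> c m = \<pi> c (lmeet L u v)"
    using fiber_proj_onto[OF z c proj(1)[OF c is_latticeD(2)[OF lattice u v] z]] by blast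
  obtain n where n: "n \<in> fiber c z" "\<pi> c n = \<pi> c (ljoin L u v)"
    using fiber_proj_onto[OF z c proj(1)[OF c is_latticeD(1)[OF lattice u v] z]] by blast
  have mnL: "m \<in> lcarrier L" "n \<in> lcarrier L" using m(1) n(1) fiber_carrier by blast+
  have retract: "\<pi> c (lmeet L (ljoin L w m) n) = \<pi> c w" if w: "w \<in> {u, v}" for w
  proof -
    have wL: "w \<in> lcarrier L" using w u v by auto
    have "\<pi> c (lmeet L (ljoin L w m) n) = \<pi> c (lmeet L (ljoin L w (lmeet L u v)) (ljoin L u v))"
      using wL mnL m(2) n(2) u v c by (simp add: proj is_latticeD(1,2)[OF lattice])
    also have "\<dots> = \<pi> c w"
      using lattice_retract_interval[OF lattice u v w] by simp
    finally show ?thesis .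
  qed
  have "(lmeet L (ljoin L u m) n, lmeet L (ljoin L v m) n) \<in> \<theta>"
    using lcongruenceD(5,6)[OF \<theta>] lcongruenceD(2)[OF \<theta>] uv(1) mnL by blast
  from fiber_congruenceI[OF this fiber_retract[OF z u m(1) n(1)] fiber_retract[OF z v m(1) n(1)]]
  have "(\<pi> c u, \<pi> c v) \<in> fiber_congruence \<theta> c z"
    using retract by simp
  then have total: "fiber_congruence \<theta> c z = lcarrier (F c) \<times> lcarrier (F c)"
    using simple_latticeD[OF simple lcongruence_fiber_congruence[OF \<theta> c z]] uv(2) by blast
  have "(\<pi> c z, \<pi> c z') \<in> fiber_congruence \<theta> c z"
    unfolding total using proj(1)[OF c z z] proj(1)[OF c fiber_carrier[OF z'] z] by blast
  then obtain w w' where w: "(w, w') \<in> \<theta>" "w \<in> fiber c z" "w' \<in> fiber c z"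
    "\<pi> c w = \<pi> c z" "\<pi> c w' = \<pi> c z'"
    by (rule fiber_congruenceE)
  have "z \<in> fiber c z" using z unfolding fiber_def by simp
  then have "w = z" "w' = z'" using fiber_proj_inj[OF c] w z' by blast+
  then show ?thesis using w(1) by simp
qed

lemma congruence_collapses_coordinates:
  assumes \<theta>: "lcongruence L \<theta>" and simple: "\<And>c. c \<in> I \<Longrightarrow> simple_lattice (F c)"
    and y: "y \<in> lcarrier L" and J: "finite J" "J \<subseteq> {c \<in> I. \<exists>(u, v)\<in>\<theta>. \<pi> c u \<noteq> \<pi> c v}"
  shows "\<forall>x\<in>lcarrier L. {c \<in> I. \<pi> c x \<noteq> \<pi> c y} \<subseteq> J \<longrightarrow> (x, y) \<in> \<theta>"
  using J
proof (induction J rule: finite_induct)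
  case empty
  show ?case
    using proj_sep y lcongruenceD(2)[OF \<theta>] by fastforce
next
  case (insert c J)
  show ?case
  proof (intro ballI impI)
    fix x assume x: "x \<in> lcarrier L" and diff: "{c' \<in> I. \<pi> c' x \<noteq> \<pi> c' y} \<subseteq> insert c J"
    obtain u v where c: "c \<in> I" and uv: "(u, v) \<in> \<theta>" "\<pi> c u \<noteq> \<pi> c v"
      using insert.prems by blast
    obtain z where z: "z \<in> fiber c x" "\<pi> c z = \<pi> c y"
      using fiber_proj_onto[OF x c proj(1)[OF c y y]] by blast
    have "{c' \<in> I. \<pi> c' z \<noteq> \<pi> c' y} \<subseteq> J"
    proof
      fix c' assume "c' \<in> {c' \<in> I. \<pi> c' z \<noteq> \<pi> c' y}"
      then have "c' \<in> I - {c}" "\<pi> c' z \<noteq> \<pi> c' y" using z(2) by auto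
      then show "c' \<in> J" using diff z(1) unfolding fiber_def by auto
    qed
    then have "(z, y) \<in> \<theta>"
      using insert.IH insert.prems fiber_carrier[OF z(1)] by blast
    moreover have "(x, z) \<in> \<theta>"
      by (rule fiber_collapse[OF \<theta> c simple[OF c] uv x z(1)])
    ultimately show "(x, y) \<in> \<theta>"
      using lcongruenceD(4)[OF \<theta>] by blast
  qed
qed

theorem product_congruence:
  assumes \<theta>: "lcongruence L \<theta>" and simple: "\<And>c. c \<in> I \<Longrightarrow> simple_lattice (F c)"
    and xy: "x \<in> lcarrier L" "y \<in> lcarrier L"
    and collapsed: "\<And>c. c \<in> I \<Longrightarrow> \<pi> c x \<noteq> \<pi> c y \<Longrightarrow> \<exists>(u, v)\<in>\<theta>. \<pi> c u \<noteq> \<pi> c v"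
  shows "(x, y) \<in> \<theta>"
proof -
  have "finite {c \<in> I. \<pi> c x \<noteq> \<pi> c y}" using finite_index by simp
  moreover have "{c \<in> I. \<pi> c x \<noteq> \<pi> c y} \<subseteq> {c \<in> I. \<exists>(u, v)\<in>\<theta>. \<pi> c u \<noteq> \<pi> c v}"
    using collapsed by blast
  ultimately show ?thesis
    using congruence_collapses_coordinates[OF \<theta> simple xy(2)] xy(1) by blast
qed

end

definition two_latt :: "nat latt" where
  "two_latt = \<lparr>lcarrier = {0, 1}, ljoin = max, lmeet = min\<rparr>"

lemma is_lattice_two: "is_lattice two_latt"
  unfolding is_lattice_def two_latt_def by auto

lemma simple_two: "simple_lattice two_latt"
  by (rule simple_lattice_doubleton) (simp add: two_latt_def)

text \<open>\<open>G\<close> is the cube \<open>2\<^sup>3\<close> on \<open>0..7\<close> (bitwise operations) with an extra element \<open>8\<close> strictly between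
  \<open>0\<close> and \<open>7\<close> and incomparable to \<open>1..6\<close>.\<close>

definition gjoin :: "nat \<Rightarrow> nat \<Rightarrow> nat" where
  "gjoin a b =
     (if a = b then a else if a = 0 then b else if b = 0 then a
      else if a = 8 \<or> b = 8 then 7
      else max (a mod 2) (b mod 2) + 2 * max (a div 2 mod 2) (b div 2 mod 2) + 4 * max (a div 4) (b div 4))"

definition gmeet :: "nat \<Rightarrow> nat \<Rightarrow> nat" where
  "gmeet a b =
     (if a = b then a else if a = 7 then b else if b = 7 then a
      else if a = 8 \<or> b = 8 then 0
      else min (a mod 2) (b mod 2) + 2 * min (a div 2 mod 2) (b div 2 mod 2) + 4 * min (a div 4) (b div 4))"

definition G_latt :: "nat latt" where
  "G_latt = \<lparr>lcarrier = {..<9}, ljoin = gjoin, lmeet = gmeet\<rparr>"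

lemma lessThan_nine: "{..<9::nat} = {0, 1, 2, 3, 4, 5, 6, 7, 8}"
  by auto

lemma G_binary_laws:
  assumes "x \<in> {..<9}" "y \<in> {..<9}"
  shows "gjoin x y \<in> {..<9} \<and> gmeet x y \<in> {..<9} \<and> gjoin x y = gjoin y x \<and> gmeet x y = gmeet y x \<and>
    gjoin x (gmeet x y) = x \<and> gmeet x (gjoin x y) = x"
  using assms unfolding lessThan_nine by (elim insertE emptyE; simp add: gjoin_def gmeet_def)

lemma G_assoc:
  assumes "x \<in> {..<9}" "y \<in> {..<9}" "z \<in> {..<9}"
  shows "gjoin (gjoin x y) z = gjoin x (gjoin y z) \<and> gmeet (gmeet x y) z = gmeet x (gmeet y z)"
  using assms unfolding lessThan_nine by (elim insertE emptyE; simp add: gjoin_def gmeet_def)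

lemma is_lattice_G: "is_lattice G_latt"
  unfolding is_lattice_def G_latt_def using G_binary_laws G_assoc by (simp add: lessThan_empty_iff)

lemma gmeet_bounds: "gmeet 0 x = 0" "gmeet 7 x = x"
  by (simp_all add: gmeet_def)

lemma gjoin_top: "g < 9 \<Longrightarrow> gjoin g 7 = 7"
proof -
  assume "g < 9"
  then have "g \<in> {0, 1, 2, 3, 4, 5, 6, 7, 8}" by auto
  then show ?thesis by (elim insertE emptyE) (simp_all add: gjoin_def)
qed

lemma G_meet_separates:
  assumes "g < 9" "h < 9" "g \<noteq> h"
  shows "\<exists>w\<in>{..<9}. gmeet g w = 0 \<and> gmeet h w \<noteq> 0 \<or> gmeet h w = 0 \<and> gmeet g w \<noteq> 0"
proof -
  have "g \<in> {0, 1, 2, 3, 4, 5, 6, 7, 8}" "h \<in> {0, 1, 2, 3, 4, 5, 6, 7, 8}"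
    using assms(1,2) by auto
  then show ?thesis
    using assms(3) unfolding lessThan_nine by (elim insertE emptyE; simp add: gmeet_def)
qed

lemma G_congruenceD:
  assumes "lcongruence G_latt \<theta>"
  shows "x < 9 \<Longrightarrow> (x, x) \<in> \<theta>"
    and "(x, y) \<in> \<theta> \<Longrightarrow> (x', y') \<in> \<theta> \<Longrightarrow> (gjoin x x', gjoin y y') \<in> \<theta>"
    and "(x, y) \<in> \<theta> \<Longrightarrow> (x', y') \<in> \<theta> \<Longrightarrow> (gmeet x x', gmeet y y') \<in> \<theta>"
  using lcongruenceD(2,5,6)[OF assms] by (simp_all add: G_latt_def)

lemma G_congruence_total:
  assumes \<theta>: "lcongruence G_latt \<theta>" and "(8, 7) \<in> \<theta>"
  shows "lcarrier G_latt \<times> lcarrier G_latt \<subseteq> \<theta>"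
proof -
  note refl = G_congruenceD(1)[OF \<theta>] and join = G_congruenceD(2)[OF \<theta>]
    and meet = G_congruenceD(3)[OF \<theta>]
  have "(0, 1) \<in> \<theta>" "(0, 6) \<in> \<theta>"
    using meet[OF \<open>(8, 7) \<in> \<theta>\<close> refl[of 1]] meet[OF \<open>(8, 7) \<in> \<theta>\<close> refl[of 6]]
    by (simp_all add: gmeet_def)
  then have "(0, 7) \<in> \<theta>"
    using join[of 0 1 0 6] by (simp add: gjoin_def)
  then have bot: "(0, x) \<in> \<theta>" if "x < 9" for x
    using meet[OF _ refl[OF that], of 0 7] by (simp add: gmeet_bounds)
  have "lcarrier G_latt = {..<9}" by (simp add: G_latt_def)
  then show ?thesis
    using bot lcongruenceD(3,4)[OF \<theta>] by blast
qed

lemma simple_G: "simple_lattice G_latt"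
proof (rule simple_latticeI)
  fix \<theta> g h assume \<theta>: "lcongruence G_latt \<theta>" and gh: "(g, h) \<in> \<theta>" "g \<noteq> h"
  note refl = G_congruenceD(1)[OF \<theta>] and join = G_congruenceD(2)[OF \<theta>]
    and meet = G_congruenceD(3)[OF \<theta>]
  have "g < 9" "h < 9" using gh(1) lcongruenceD(1)[OF \<theta>] by (auto simp: G_latt_def)
  then obtain w where w: "w < 9" "gmeet g w = 0 \<and> gmeet h w \<noteq> 0 \<or> gmeet h w = 0 \<and> gmeet g w \<noteq> 0"
    using G_meet_separates gh(2) by blast
  define a where "a = gmeet g w + gmeet h w"
  have "gmeet g w < 9" "gmeet h w < 9"
    using is_latticeD(2)[OF is_lattice_G] w(1) \<open>g < 9\<close> \<open>h < 9\<close> by (auto simp: G_latt_def)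
  then have a: "(0, a) \<in> \<theta>" "a \<noteq> 0"
    using meet[OF gh(1) refl[OF w(1)]] w(2) lcongruenceD(3)[OF \<theta>] unfolding a_def by auto
  have "(8, 7) \<in> \<theta>"
  proof (cases "a = 8")
    case True
    then have "(1, 7) \<in> \<theta>"
      using join[OF a(1) refl[of 1]] by (simp add: gjoin_def)
    then have "(0, 2) \<in> \<theta>"
      using meet[OF _ refl[of 2], of 1 7] by (simp add: gmeet_def)
    then show ?thesis
      using join[OF _ refl[of 8], of 0 2] by (simp add: gjoin_def)
  next
    case False
    then show ?thesis
      using join[OF a(1) refl[of 8]] a(2) by (simp add: gjoin_def)
  qed
  then show "lcarrier G_latt \<times> lcarrier G_latt \<subseteq> \<theta>"
    by (rule G_congruence_total[OF \<theta>])
qed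

definition factor :: "nat \<Rightarrow> nat latt" where
  "factor c = (if c = 4 then G_latt else two_latt)"

lemma is_lattice_factor: "is_lattice (factor c)"
  by (simp add: factor_def is_lattice_G is_lattice_two)

lemma simple_factor: "simple_lattice (factor c)"
  by (simp add: factor_def simple_G simple_two)

lemma lcarrier_factor: "lcarrier (factor c) = (if c = 4 then {..<9} else {0, 1})"
  by (simp add: factor_def G_latt_def two_latt_def)

text \<open>\<open>U = 2\<^sup>4 \<times> G\<close> is encoded in \<open>{..<144}\<close>: the coordinates \<open>0..3\<close> of \<open>x\<close> are its four lowest binary
  digits and coordinate \<open>4\<close> is \<open>x div 16 \<in> G\<close>.\<close>

definition coord :: "nat \<Rightarrow> nat \<Rightarrow> nat" where
  "coord c x = (if c = 4 then x div 16 else x div 2 ^ c mod 2)"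

definition of_coords :: "(nat \<Rightarrow> nat) \<Rightarrow> nat" where
  "of_coords v = v 0 + 2 * (v 1 + 2 * (v 2 + 2 * (v 3 + 2 * v 4)))"

lemma coord_halving:
  "coord 0 x = x mod 2" "coord 1 x = x div 2 mod 2" "coord 2 x = x div 2 div 2 mod 2"
  "coord 3 x = x div 2 div 2 div 2 mod 2" "coord 4 x = x div 2 div 2 div 2 div 2"
  by (simp_all add: coord_def flip: div_mult2_eq)

lemma coord_of_coords:
  assumes "\<forall>c<4. v c \<le> 1" "c < 5"
  shows "coord c (of_coords v) = v c"
proof -
  have halve: "(a + 2 * r) div 2 = r" "(a + 2 * r) mod 2 = a" if "a \<le> 1" for a r :: nat
    using that by auto
  have "v 0 \<le> 1" "v 1 \<le> 1" "v 2 \<le> 1" "v 3 \<le> 1" using assms(1) by auto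
  note bits = halve[OF this(1)] halve[OF this(2)] halve[OF this(3)] halve[OF this(4)]
  have "c = 0 \<or> c = 1 \<or> c = 2 \<or> c = 3 \<or> c = 4" using assms(2) by auto
  then show ?thesis
    by (elim disjE) (simp_all only: coord_halving of_coords_def bits)
qed

lemma of_coords_coord: "of_coords (\<lambda>c. coord c x) = x"
proof -
  have halve: "n mod 2 + 2 * (n div 2) = n" for n :: nat by simp
  show ?thesis
    unfolding of_coords_def coord_halving by (simp only: halve)
qed

lemma coord_eqI:
  assumes "\<And>c. c < 5 \<Longrightarrow> coord c x = coord c y"
  shows "x = y"
proof -
  have "of_coords (\<lambda>c. coord c x) = of_coords (\<lambda>c. coord c y)"
    unfolding of_coords_def using assms by simp
  then show ?thesis by (simp add: of_coords_coord)
qed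

lemma coord_in_factor: "x < 144 \<Longrightarrow> c < 5 \<Longrightarrow> coord c x \<in> lcarrier (factor c)"
  by (auto simp: coord_def lcarrier_factor)

lemma of_coords_less:
  assumes "\<And>c. c < 5 \<Longrightarrow> v c \<in> lcarrier (factor c)"
  shows "of_coords v < 144"
proof -
  have "v 0 \<le> 1" "v 1 \<le> 1" "v 2 \<le> 1" "v 3 \<le> 1" "v 4 < 9"
    using assms[of 0] assms[of 1] assms[of 2] assms[of 3] assms[of 4] by (auto simp: lcarrier_factor)
  then show ?thesis unfolding of_coords_def by simp
qed

definition joinU :: "nat \<Rightarrow> nat \<Rightarrow> nat" where
  "joinU x y = of_coords (\<lambda>c. ljoin (factor c) (coord c x) (coord c y))"

definition meetU :: "nat \<Rightarrow> nat \<Rightarrow> nat" where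
  "meetU x y = of_coords (\<lambda>c. lmeet (factor c) (coord c x) (coord c y))"

lemma coord_joinU: "c < 5 \<Longrightarrow> coord c (joinU x y) = ljoin (factor c) (coord c x) (coord c y)"
  unfolding joinU_def
  by (rule coord_of_coords) (auto simp: factor_def two_latt_def coord_def)

lemma coord_meetU: "c < 5 \<Longrightarrow> coord c (meetU x y) = lmeet (factor c) (coord c x) (coord c y)"
  unfolding meetU_def
  by (rule coord_of_coords) (auto simp: factor_def two_latt_def coord_def)

definition lattice_on :: "nat set \<Rightarrow> nat latt" where
  "lattice_on C = \<lparr>lcarrier = C, ljoin = joinU, lmeet = meetU\<rparr>"

lemma lattice_on_simps [simp]:
  "lcarrier (lattice_on C) = C" "ljoin (lattice_on C) = joinU" "lmeet (lattice_on C) = meetU"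
  by (simp_all add: lattice_on_def)

definition U_sublattice :: "nat set \<Rightarrow> bool" where
  "U_sublattice C \<longleftrightarrow> C \<noteq> {} \<and> C \<subseteq> {..<144} \<and> (\<forall>x\<in>C. \<forall>y\<in>C. joinU x y \<in> C \<and> meetU x y \<in> C)"

lemma U_sublatticeD:
  assumes "U_sublattice C"
  shows "C \<noteq> {}" "x \<in> C \<Longrightarrow> x < 144"
    and "x \<in> C \<Longrightarrow> y \<in> C \<Longrightarrow> joinU x y \<in> C" "x \<in> C \<Longrightarrow> y \<in> C \<Longrightarrow> meetU x y \<in> C"
  using assms unfolding U_sublattice_def by auto

lemma coord_hom:
  assumes "C \<subseteq> {..<144}" "c < 5"
  shows "lattice_hom (lattice_on C) (factor c) (coord c)"
  unfolding lattice_hom_def using assms coord_in_factor by (auto simp: coord_joinU coord_meetU)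

lemma is_lattice_on:
  assumes "U_sublattice C"
  shows "is_lattice (lattice_on C)"
proof (rule is_lattice_subdirect[where I = "{..<5}" and F = factor and \<pi> = coord])
  show "\<And>c. c \<in> {..<5} \<Longrightarrow> lattice_hom (lattice_on C) (factor c) (coord c)"
    using coord_hom U_sublatticeD(2)[OF assms] by blast
qed (use assms U_sublatticeD coord_eqI is_lattice_factor in auto)

lemma U_sublattice_U: "U_sublattice {..<144}"
proof -
  have "joinU x y < 144" "meetU x y < 144" if "x < 144" "y < 144" for x y
    unfolding joinU_def meetU_def using that coord_in_factor is_latticeD(1,2)[OF is_lattice_factor]
    by (auto intro!: of_coords_less)
  then show ?thesis unfolding U_sublattice_def by (auto simp: lessThan_empty_iff)
qed

lemma is_lattice_U: "is_lattice (lattice_on {..<144})"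
  by (rule is_lattice_on[OF U_sublattice_U])

lemma U_sublattice_chain3:
  assumes "a < 144" "b < 144" "c < 144" "joinU a b = b" "joinU b c = c"
  shows "U_sublattice {a, b, c}"
proof -
  have L: "is_lattice (lattice_on {..<144})" by (rule is_lattice_U)
  note laws = is_latticeD[OF L, simplified] is_lattice_assoc[OF L, simplified]
  have ac: "joinU a c = c"
    using laws(7)[of a b c] assms by simp
  have "meetU a b = a" "meetU b c = b" "meetU a c = a"
    using laws(6)[of a b] laws(6)[of b c] laws(6)[of a c] assms ac by simp_all
  moreover have "joinU x x = x" "meetU x x = x" if "x < 144" for x
    using lattice_idem[OF L] that by simp_all
  ultimately show ?thesis
    unfolding U_sublattice_def using assms ac laws(3,4) by auto
qed

definition U_top :: nat where
  "U_top = of_coords (\<lambda>c. if c = 4 then 7 else 1)"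

lemma coord_zero [simp]: "coord c 0 = 0"
  by (simp add: coord_def)

lemma coord_U_top: "c < 5 \<Longrightarrow> coord c U_top = (if c = 4 then 7 else 1)"
  unfolding U_top_def by (rule coord_of_coords) auto

lemma U_top_less: "U_top < 144"
  by (simp add: U_top_def of_coords_def)

lemma joinU_zero: "x < 144 \<Longrightarrow> joinU 0 x = x"
  by (rule coord_eqI) (auto simp: coord_joinU factor_def two_latt_def G_latt_def gjoin_def)

lemma joinU_U_top: "x < 144 \<Longrightarrow> joinU x U_top = U_top"
proof (rule coord_eqI)
  fix c :: nat assume "x < 144" "c < 5"
  then show "coord c (joinU x U_top) = coord c U_top"
    using coord_in_factor[of x c] gjoin_top
    by (auto simp: coord_joinU coord_U_top factor_def two_latt_def G_latt_def lcarrier_factor)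
qed

section \<open>Congruences determined by coordinates\<close>

definition coord_diff :: "nat \<Rightarrow> nat \<Rightarrow> nat set" where
  "coord_diff x y = {c. c < 5 \<and> coord c x \<noteq> coord c y}"

definition coord_support :: "(nat \<times> nat) set \<Rightarrow> nat set" where
  "coord_support R = (\<Union>(x, y)\<in>R. coord_diff x y)"

definition coord_determined :: "nat set \<Rightarrow> bool" where
  "coord_determined C \<longleftrightarrow> (\<forall>\<theta>. lcongruence (lattice_on C) \<theta> \<longrightarrow>
     (\<forall>x\<in>C. \<forall>y\<in>C. coord_diff x y \<subseteq> coord_support \<theta> \<longrightarrow> (x, y) \<in> \<theta>))"

definition diff_sets :: "nat set \<Rightarrow> nat set set" where
  "diff_sets C = {coord_diff x y | x y. x \<in> C \<and> y \<in> C}"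

definition coord_congruence :: "nat set \<Rightarrow> nat set \<Rightarrow> (nat \<times> nat) set" where
  "coord_congruence C S = {(x, y) \<in> C \<times> C. coord_diff x y \<subseteq> S}"

lemma coord_diff_iff: "c \<in> coord_diff x y \<longleftrightarrow> c < 5 \<and> coord c x \<noteq> coord c y"
  by (simp add: coord_diff_def)

lemma coord_diff_self [simp]: "coord_diff x x = {}"
  by (simp add: coord_diff_def)

lemma coord_diff_sym: "coord_diff x y = coord_diff y x"
  by (auto simp: coord_diff_def)

lemma coord_diff_trans: "coord_diff x z \<subseteq> coord_diff x y \<union> coord_diff y z"
  by (auto simp: coord_diff_def)

lemma coord_diff_ops:
  "coord_diff (joinU x u) (joinU y v) \<subseteq> coord_diff x y \<union> coord_diff u v"
  "coord_diff (meetU x u) (meetU y v) \<subseteq> coord_diff x y \<union> coord_diff u v"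
  by (auto simp: coord_diff_def coord_joinU coord_meetU)

lemma coord_diff_eq:
  "coord_diff x y = (if coord 0 x = coord 0 y then {} else {0}) \<union> (if coord 1 x = coord 1 y then {} else {1}) \<union>
     (if coord 2 x = coord 2 y then {} else {2}) \<union> (if coord 3 x = coord 3 y then {} else {3}) \<union>
     (if coord 4 x = coord 4 y then {} else {4})"
proof (rule set_eqI)
  fix c :: nat
  consider "c = 0" | "c = 1" | "c = 2" | "c = 3" | "c = 4" | "c \<ge> 5" by linarith
  then show "c \<in> coord_diff x y \<longleftrightarrow> c \<in> (if coord 0 x = coord 0 y then {} else {0}) \<union>
     (if coord 1 x = coord 1 y then {} else {1}) \<union> (if coord 2 x = coord 2 y then {} else {2}) \<union>
     (if coord 3 x = coord 3 y then {} else {3}) \<union> (if coord 4 x = coord 4 y then {} else {4})"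
    by cases (simp_all add: coord_diff_def)
qed

lemma coord_support_mem: "(x, y) \<in> R \<Longrightarrow> coord_diff x y \<subseteq> coord_support R"
  by (auto simp: coord_support_def)

lemma lcongruence_coord_congruence:
  assumes "U_sublattice C"
  shows "lcongruence (lattice_on C) (coord_congruence C S)"
proof (rule lcongruenceI)
  fix x y u v assume "(x, y) \<in> coord_congruence C S" "(u, v) \<in> coord_congruence C S"
  then show "(ljoin (lattice_on C) x u, ljoin (lattice_on C) y v) \<in> coord_congruence C S \<and>
      (lmeet (lattice_on C) x u, lmeet (lattice_on C) y v) \<in> coord_congruence C S"
    using coord_diff_ops[of x u y v] U_sublatticeD(3,4)[OF assms]
    unfolding coord_congruence_def by auto
next
  fix x y z assume "(x, y) \<in> coord_congruence C S" "(y, z) \<in> coord_congruence C S"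
  then show "(x, z) \<in> coord_congruence C S"
    using coord_diff_trans[of x z y] unfolding coord_congruence_def by auto
qed (auto simp: coord_congruence_def coord_diff_sym)

lemma coord_support_Cg:
  assumes C: "U_sublattice C" and R: "R \<subseteq> C \<times> C"
  shows "coord_support (Cg (lattice_on C) R) = coord_support R"
proof
  show "coord_support R \<subseteq> coord_support (Cg (lattice_on C) R)"
    using Cg_upper unfolding coord_support_def by blast
  have "R \<subseteq> coord_congruence C (coord_support R)"
    using R coord_support_mem unfolding coord_congruence_def by fast
  then have "Cg (lattice_on C) R \<subseteq> coord_congruence C (coord_support R)"
    by (rule Cg_least[OF lcongruence_coord_congruence[OF C]])
  then show "coord_support (Cg (lattice_on C) R) \<subseteq> coord_support R"
    unfolding coord_support_def coord_congruence_def by blast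
qed

lemma lcongruence_Con_c:
  assumes "U_sublattice C" "\<theta> \<in> Con_c (lattice_on C)"
  shows "lcongruence (lattice_on C) \<theta>"
  using assms lcongruence_Cg[OF is_lattice_on[OF assms(1)]] unfolding Con_c_def by auto

lemma coord_support_finite_subset:
  assumes "finite F" "F \<subseteq> C \<times> C" "C \<noteq> {}"
    and closed: "\<And>A B. A \<in> diff_sets C \<Longrightarrow> B \<in> diff_sets C \<Longrightarrow> A \<union> B \<in> diff_sets C"
  shows "coord_support F \<in> diff_sets C"
  using assms(1,2)
proof (induction F rule: finite_induct)
  case empty
  obtain x where "x \<in> C" using assms(3) by blast
  then have "coord_diff x x \<in> diff_sets C" unfolding diff_sets_def by blast
  then show ?case by (simp add: coord_support_def)
next
  case (insert p F)
  obtain x y where p: "p = (x, y)" "x \<in> C" "y \<in> C" using insert.prems by auto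
  then have "coord_diff x y \<in> diff_sets C" unfolding diff_sets_def by blast
  moreover have "coord_support F \<in> diff_sets C" using insert by simp
  ultimately show ?case
    using closed p(1) by (simp add: coord_support_def)
qed

lemma coord_support_bij:
  assumes C: "U_sublattice C" and det: "coord_determined C"
    and closed: "\<And>A B. A \<in> diff_sets C \<Longrightarrow> B \<in> diff_sets C \<Longrightarrow> A \<union> B \<in> diff_sets C"
  shows "bij_betw coord_support (Con_c (lattice_on C)) (diff_sets C)"
proof (rule bij_betw_imageI)
  have le: "\<theta> \<subseteq> \<theta>'" if "\<theta> \<in> Con_c (lattice_on C)" "\<theta>' \<in> Con_c (lattice_on C)"
    "coord_support \<theta> = coord_support \<theta>'" for \<theta> \<theta>'
  proof (rule subrelI)
    fix x y assume xy: "(x, y) \<in> \<theta>"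
    then have "x \<in> C" "y \<in> C"
      using lcongruenceD(1)[OF lcongruence_Con_c[OF C that(1)]] by auto
    moreover have "coord_diff x y \<subseteq> coord_support \<theta>'"
      using coord_support_mem[OF xy] that(3) by simp
    ultimately show "(x, y) \<in> \<theta>'"
      using det lcongruence_Con_c[OF C that(2)] unfolding coord_determined_def by blast
  qed
  show "inj_on coord_support (Con_c (lattice_on C))"
    by (rule inj_onI) (use le in blast)
  show "coord_support ` Con_c (lattice_on C) = diff_sets C"
  proof
    show "coord_support ` Con_c (lattice_on C) \<subseteq> diff_sets C"
      using coord_support_Cg[OF C] coord_support_finite_subset[OF _ _ U_sublatticeD(1)[OF C] closed]
      unfolding Con_c_def by auto
    show "diff_sets C \<subseteq> coord_support ` Con_c (lattice_on C)"
    proof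
      fix S assume "S \<in> diff_sets C"
      then obtain x y where xy: "x \<in> C" "y \<in> C" "S = coord_diff x y"
        unfolding diff_sets_def by blast
      then have "S = coord_support (Cg (lattice_on C) {(x, y)})"
        using coord_support_Cg[OF C, of "{(x, y)}"] by (simp add: coord_support_def)
      moreover have "Cg (lattice_on C) {(x, y)} \<in> Con_c (lattice_on C)"
        using xy unfolding Con_c_def by auto
      ultimately show "S \<in> coord_support ` Con_c (lattice_on C)" by blast
    qed
  qed
qed

lemma coord_support_collapsed:
  assumes "coord_diff x y \<subseteq> coord_support \<theta>" "c < 5" "coord c x \<noteq> coord c y"
  shows "\<exists>(u, v)\<in>\<theta>. coord c u \<noteq> coord c v"
  using assms unfolding coord_support_def coord_diff_def by blast

lemma coord_determined_product:
  assumes C: "U_sublattice C" and I: "I \<subseteq> {..<5}"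
    and sep: "\<And>x y. \<lbrakk>x \<in> C; y \<in> C; \<And>c. c \<in> I \<Longrightarrow> coord c x = coord c y\<rbrakk> \<Longrightarrow> x = y"
    and update: "\<And>x c g. \<lbrakk>x \<in> C; c \<in> I; g \<in> lcarrier (factor c)\<rbrakk> \<Longrightarrow>
      \<exists>z\<in>C. coord c z = g \<and> (\<forall>c'\<in>I - {c}. coord c' z = coord c' x)"
  shows "coord_determined C"
proof -
  interpret lattice_product "lattice_on C" I factor coord
  proof
    show "is_lattice (lattice_on C)" by (rule is_lattice_on[OF C])
    show "finite I" using I finite_subset by blast
    show "\<And>c. c \<in> I \<Longrightarrow> lattice_hom (lattice_on C) (factor c) (coord c)"
      using coord_hom U_sublatticeD(2)[OF C] I by blast
  qed (use sep update in simp_all)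
  show ?thesis
    unfolding coord_determined_def
  proof (intro allI impI ballI)
    fix \<theta> x y assume \<theta>: "lcongruence (lattice_on C) \<theta>" and xy: "x \<in> C" "y \<in> C"
      and diff: "coord_diff x y \<subseteq> coord_support \<theta>"
    show "(x, y) \<in> \<theta>"
      by (rule product_congruence[OF \<theta> simple_factor])
        (use xy coord_support_collapsed[OF diff] I in auto)
  qed
qed

lemma coord_determined_chain3:
  assumes C: "U_sublattice {a, b, c}" and order: "joinU a b = b" "joinU b c = c"
    and k: "k < 5" "coord k a \<noteq> coord k b" "coord k b = coord k c"
    and l: "l < 5" "coord l a = coord l b" "coord l b \<noteq> coord l c"
  shows "coord_determined {a, b, c}"
  unfolding coord_determined_def
proof (intro allI impI ballI)
  fix \<theta> x y assume \<theta>: "lcongruence (lattice_on {a, b, c}) \<theta>" and xy: "x \<in> {a, b, c}" "y \<in> {a, b, c}"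
    and diff: "coord_diff x y \<subseteq> coord_support \<theta>"
  show "(x, y) \<in> \<theta>"
    by (rule chain3_congruence[OF is_lattice_on[OF C] \<theta> _ _ _ k(2,3) l(2,3)])
      (use order xy coord_support_collapsed[OF diff] k(1) l(1) in simp_all)
qed

lemma diff_sets_chain3:
  "diff_sets {a, b, c} = {{}, coord_diff a b, coord_diff b c, coord_diff a c}"
proof -
  have "coord_diff x y \<in> {{}, coord_diff a b, coord_diff b c, coord_diff a c}" if "x \<in> {a, b, c}" "y \<in> {a, b, c}" for x y
    using that coord_diff_sym by auto
  moreover have "{} = coord_diff a a" by simp
  ultimately show ?thesis
    unfolding diff_sets_def by blast
qed

lemma subset_doubleton_iff: "F \<subseteq> {A, B} \<longleftrightarrow> F = {} \<or> F = {A} \<or> F = {B} \<or> F = {A, B}"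
  by (rule subset_insert_iff[THEN trans]) (auto simp: subset_singleton_iff)

lemma gen_sl_doubleton: "gen_sl {A, B} = {{}, A, B, A \<union> B}"
proof -
  have "gen_sl {A, B} = \<Union> ` {{}, {A}, {B}, {A, B}}"
    unfolding gen_sl_def subset_doubleton_iff by blast
  then show ?thesis by simp
qed

lemma gen_sl_eqI:
  assumes "finite G" "\<And>g. g \<in> G \<Longrightarrow> P g" "P {}" "\<And>X Y. P X \<Longrightarrow> P Y \<Longrightarrow> P (X \<union> Y)"
    and "\<And>X. P X \<Longrightarrow> X = \<Union>{g \<in> G. g \<subseteq> X}"
  shows "gen_sl G = {X. P X}"
proof (intro equalityI subsetI)
  fix X assume "X \<in> gen_sl G"
  then obtain F where F: "X = \<Union>F" "F \<subseteq> G" unfolding gen_sl_def by blast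
  have "finite F" using F(2) assms(1) finite_subset by blast
  then have "P (\<Union>F)" using F(2)
    by (induction F rule: finite_induct) (use assms(2-4) in auto)
  then show "X \<in> {X. P X}" using F(1) by simp
next
  fix X assume "X \<in> {X. P X}"
  then show "X \<in> gen_sl G" unfolding gen_sl_def using assms(5) by blast
qed

lemma gen_sl_Un:
  assumes "A \<in> gen_sl G" "B \<in> gen_sl G"
  shows "A \<union> B \<in> gen_sl G"
proof -
  obtain F F' where "A = \<Union>F" "F \<subseteq> G" "B = \<Union>F'" "F' \<subseteq> G"
    using assms unfolding gen_sl_def by blast
  then have "A \<union> B = \<Union>(F \<union> F')" "F \<union> F' \<subseteq> G" by auto
  then show ?thesis unfolding gen_sl_def by blast
qed

section \<open>The vertex lattices\<close>

lemma less_3_cases: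
  assumes "i < (3::nat)"
  obtains "i = 0" | "i = 1" | "i = 2"
  using assms by linarith

definition C_bounds :: "nat set" where
  "C_bounds = {0, U_top}"

lemma U_sublattice_bounds: "U_sublattice C_bounds"
  using U_sublattice_chain3[of 0 0 U_top] U_top_less joinU_zero joinU_U_top unfolding C_bounds_def by simp

lemma coord_determined_bounds: "coord_determined C_bounds"
proof (rule coord_determined_product[OF U_sublattice_bounds, of "{0}"])
  have "coord 0 U_top = 1" using coord_U_top[of 0] by simp
  then show "\<And>x y. x \<in> C_bounds \<Longrightarrow> y \<in> C_bounds \<Longrightarrow> (\<And>c. c \<in> {0} \<Longrightarrow> coord c x = coord c y) \<Longrightarrow> x = y"
    unfolding C_bounds_def by auto
  fix x c g assume "c \<in> {0::nat}" "g \<in> lcarrier (factor c)"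
  then have "g \<in> {0, 1}" "c = 0" by (auto simp: lcarrier_factor)
  then show "\<exists>z\<in>C_bounds. coord c z = g \<and> (\<forall>c'\<in>{0} - {c}. coord c' z = coord c' x)"
    using \<open>coord 0 U_top = 1\<close> unfolding C_bounds_def by auto
qed auto

lemma diff_sets_bounds: "diff_sets C_bounds = two_sl"
proof -
  have "coord_diff 0 U_top = {0, 1, 2, 3, 4}"
    by (auto simp: coord_diff_eq U_top_def of_coords_def coord_def)
  then show ?thesis
    using diff_sets_chain3[of 0 0 U_top] unfolding C_bounds_def two_sl_def by auto
qed

text \<open>\<open>chain_mid i\<close> lies in \<open>C_cube j\<close> for \<open>j \<noteq> i\<close>, and its coordinate differences from \<open>0\<close> and from
  \<open>U_top\<close> are the two generators of \<open>S_sl i\<close>.\<close>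

definition chain_mid :: "nat \<Rightarrow> nat" where
  "chain_mid i = of_coords ((!) ([[1, 1, 0, 0, 3], [0, 1, 1, 0, 8], [1, 0, 1, 0, 1]] ! i))"

definition C_chain :: "nat \<Rightarrow> nat set" where
  "C_chain i = {0, chain_mid i, U_top}"

lemma chain_mid_less: "i < 3 \<Longrightarrow> chain_mid i < 144"
  by (erule less_3_cases) (simp_all add: chain_mid_def of_coords_def)

lemma U_sublattice_chain: "i < 3 \<Longrightarrow> U_sublattice (C_chain i)"
  unfolding C_chain_def
  by (rule U_sublattice_chain3) (simp_all add: chain_mid_less U_top_less joinU_zero joinU_U_top)

lemma coord_determined_chain:
  assumes "i < 3"
  shows "coord_determined (C_chain i)"
proof -
  define k :: nat where "k = [0, 1, 0] ! i"
  define l :: nat where "l = [2, 0, 1] ! i"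
  have "k < 5" "coord k 0 \<noteq> coord k (chain_mid i)" "coord k (chain_mid i) = coord k U_top"
    "l < 5" "coord l 0 = coord l (chain_mid i)" "coord l (chain_mid i) \<noteq> coord l U_top"
    using assms unfolding k_def l_def
    by (cases rule: less_3_cases; simp add: chain_mid_def of_coords_def U_top_def coord_def)+
  moreover have "joinU 0 (chain_mid i) = chain_mid i" "joinU (chain_mid i) U_top = U_top"
    using assms chain_mid_less joinU_zero joinU_U_top by auto
  ultimately show ?thesis
    using coord_determined_chain3 U_sublattice_chain[OF assms] unfolding C_chain_def by blast
qed

lemma chain_diffs:
  "coord_diff 0 (chain_mid 0) = {0, 1, 4}" "coord_diff (chain_mid 0) U_top = {2, 3, 4}"
  "coord_diff 0 (chain_mid 1) = {1, 2, 4}" "coord_diff (chain_mid 1) U_top = {0, 3, 4}"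
  "coord_diff 0 (chain_mid 2) = {0, 2, 4}" "coord_diff (chain_mid 2) U_top = {1, 3, 4}"
  "coord_diff 0 U_top = {0, 1, 2, 3, 4}"
  by (auto simp: coord_diff_eq chain_mid_def U_top_def of_coords_def coord_def)

lemma diff_sets_chain:
  assumes "i < 3"
  shows "diff_sets (C_chain i) = S_sl i"
proof -
  have "S_sl i = gen_sl {coord_diff 0 (chain_mid i), coord_diff (chain_mid i) U_top}"
    using assms by (cases rule: less_3_cases) (simp_all add: S_sl_def chain_diffs chain_diffs[unfolded One_nat_def] insert_commute)
  moreover have "coord_diff 0 U_top = coord_diff 0 (chain_mid i) \<union> coord_diff (chain_mid i) U_top"
    using assms by (cases rule: less_3_cases) (auto simp: chain_diffs chain_diffs[unfolded One_nat_def])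
  ultimately show ?thesis
    by (simp add: C_chain_def diff_sets_chain3 gen_sl_doubleton)
qed

text \<open>\<open>tau j\<close> embeds the Boolean lattice of subsets of \<open>tied j\<close> into \<open>G\<close> (onto \<open>{0, 1, 8, 7}\<close>, the cube,
  and \<open>{0, 3, 8, 7}\<close>), so coordinate \<open>4\<close> of \<open>cube_elt j S\<close> moves exactly when \<open>S\<close> moves on \<open>tied j\<close>.\<close>

definition tied :: "nat \<Rightarrow> nat set" where
  "tied j = [{0, 1}, {0, 1, 3}, {0, 2}] ! j"

definition tau :: "nat \<Rightarrow> nat set \<Rightarrow> nat" where
  "tau j S =
     (if j = 0 then (if 0 \<in> S then if 1 \<in> S then 7 else 1 else if 1 \<in> S then 8 else 0)
      else if j = 1 then of_bool (0 \<in> S) + 2 * of_bool (1 \<in> S) + 4 * of_bool (3 \<in> S)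
      else (if 0 \<in> S then if 2 \<in> S then 7 else 3 else if 2 \<in> S then 8 else 0))"

lemma tau_less: "tau j S < 9"
  by (simp add: tau_def)

lemma tau_ops:
  assumes "j < 3"
  shows "gjoin (tau j S) (tau j S') = tau j (S \<union> S') \<and> gmeet (tau j S) (tau j S') = tau j (S \<inter> S')"
  using assms
proof (cases rule: less_3_cases)
  case 1
  then show ?thesis
    by (cases "0 \<in> S"; cases "1 \<in> S"; cases "0 \<in> S'"; cases "1 \<in> S'") (simp_all add: tau_def gjoin_def gmeet_def)
next
  case 2
  then show ?thesis
    by (cases "0 \<in> S"; cases "1 \<in> S"; cases "3 \<in> S"; cases "0 \<in> S'"; cases "1 \<in> S'"; cases "3 \<in> S'")
      (simp_all add: tau_def gjoin_def gmeet_def)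
next
  case 3
  then show ?thesis
    by (cases "0 \<in> S"; cases "2 \<in> S"; cases "0 \<in> S'"; cases "2 \<in> S'") (simp_all add: tau_def gjoin_def gmeet_def)
qed

lemma tau_eq_iff:
  assumes "j < 3"
  shows "tau j S = tau j S' \<longleftrightarrow> (\<forall>a\<in>tied j. a \<in> S \<longleftrightarrow> a \<in> S')"
  using assms
proof (cases rule: less_3_cases)
  case 1
  then show ?thesis
    by (cases "0 \<in> S"; cases "1 \<in> S"; cases "0 \<in> S'"; cases "1 \<in> S'") (simp_all add: tau_def tied_def)
next
  case 2
  then show ?thesis
    by (cases "0 \<in> S"; cases "1 \<in> S"; cases "3 \<in> S"; cases "0 \<in> S'"; cases "1 \<in> S'"; cases "3 \<in> S'")
      (simp_all add: tau_def tied_def)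
next
  case 3
  then show ?thesis
    by (cases "0 \<in> S"; cases "2 \<in> S"; cases "0 \<in> S'"; cases "2 \<in> S'") (simp_all add: tau_def tied_def)
qed

lemma tied_subset: "j < 3 \<Longrightarrow> tied j \<subseteq> {0, 1, 2, 3}"
  by (erule less_3_cases) (auto simp: tied_def)

definition cube_elt :: "nat \<Rightarrow> nat set \<Rightarrow> nat" where
  "cube_elt j S = of_coords (\<lambda>c. if c = 4 then tau j S else of_bool (c \<in> S))"

definition C_cube :: "nat \<Rightarrow> nat set" where
  "C_cube j = cube_elt j ` Pow {0, 1, 2, 3}"

lemma coord_cube_elt: "c < 5 \<Longrightarrow> coord c (cube_elt j S) = (if c = 4 then tau j S else of_bool (c \<in> S))"
  unfolding cube_elt_def by (rule coord_of_coords) auto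

lemma coord_cube_elt_bit: "c \<in> {0, 1, 2, 3} \<Longrightarrow> coord c (cube_elt j S) = of_bool (c \<in> S)"
  by (auto simp: coord_cube_elt)

lemma cube_elt_less: "cube_elt j S < 144"
  unfolding cube_elt_def by (rule of_coords_less) (auto simp: lcarrier_factor tau_less)

lemma cube_elt_ops:
  assumes "j < 3"
  shows "joinU (cube_elt j S) (cube_elt j S') = cube_elt j (S \<union> S')"
    and "meetU (cube_elt j S) (cube_elt j S') = cube_elt j (S \<inter> S')"
  by (rule coord_eqI;
      simp add: coord_joinU coord_meetU coord_cube_elt tau_ops[OF assms] factor_def G_latt_def two_latt_def)+

lemma cube_elt_coords_inject:
  assumes "S \<subseteq> {0, 1, 2, 3}" "S' \<subseteq> {0, 1, 2, 3}"
    and "\<And>c. c \<in> {0, 1, 2, 3} \<Longrightarrow> coord c (cube_elt j S) = coord c (cube_elt j S')"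
  shows "S = S'"
proof -
  have "c \<in> S \<longleftrightarrow> c \<in> S'" if "c \<in> {0, 1, 2, 3}" for c
    using assms(3)[OF that] by (simp add: coord_cube_elt_bit[OF that] of_bool_eq_iff)
  then show ?thesis using assms(1,2) by auto
qed

lemma U_sublattice_cube: "j < 3 \<Longrightarrow> U_sublattice (C_cube j)"
  unfolding U_sublattice_def C_cube_def using cube_elt_less by (auto simp: cube_elt_ops)

lemma coord_determined_cube:
  assumes j: "j < 3"
  shows "coord_determined (C_cube j)"
proof (rule coord_determined_product[OF U_sublattice_cube[OF j], of "{0, 1, 2, 3}"])
  fix x y assume "x \<in> C_cube j" "y \<in> C_cube j" and eq: "\<And>c. c \<in> {0, 1, 2, 3} \<Longrightarrow> coord c x = coord c y"
  then obtain S S' where "x = cube_elt j S" "y = cube_elt j S'" "S \<subseteq> {0, 1, 2, 3}" "S' \<subseteq> {0, 1, 2, 3}"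
    unfolding C_cube_def by auto
  then show "x = y"
    using cube_elt_coords_inject eq by metis
next
  fix x c g assume "x \<in> C_cube j" "c \<in> {0, 1, 2, 3}" "g \<in> lcarrier (factor c)"
  then obtain S where S: "x = cube_elt j S" "S \<subseteq> {0, 1, 2, 3}" and g: "g \<in> {0, 1}"
    unfolding C_cube_def by (auto simp: lcarrier_factor)
  define S' where "S' = (if g = 1 then insert c S else S - {c})"
  have "cube_elt j S' \<in> C_cube j"
    using S(2) \<open>c \<in> {0, 1, 2, 3}\<close> unfolding C_cube_def S'_def by auto
  moreover have "coord c (cube_elt j S') = g" "\<forall>c'\<in>{0, 1, 2, 3} - {c}. coord c' (cube_elt j S') = coord c' x"
    using \<open>c \<in> {0, 1, 2, 3}\<close> g unfolding S(1) S'_def by (auto simp: coord_cube_elt)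
  ultimately show "\<exists>z\<in>C_cube j. coord c z = g \<and> (\<forall>c'\<in>{0, 1, 2, 3} - {c}. coord c' z = coord c' x)"
    by blast
qed auto

lemma coord_diff_cube_elt:
  assumes j: "j < 3" and S: "S \<subseteq> {0, 1, 2, 3}" "S' \<subseteq> {0, 1, 2, 3}"
  defines "D \<equiv> (S - S') \<union> (S' - S)"
  shows "coord_diff (cube_elt j S) (cube_elt j S') = D \<union> (if D \<inter> tied j = {} then {} else {4})"
proof (rule set_eqI)
  fix c :: nat
  have D: "D \<subseteq> {0, 1, 2, 3}" using S unfolding D_def by blast
  consider "c < 4" | "c = 4" | "c \<ge> 5" by linarith
  then show "c \<in> coord_diff (cube_elt j S) (cube_elt j S') \<longleftrightarrow> c \<in> D \<union> (if D \<inter> tied j = {} then {} else {4})"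
  proof cases
    case 1
    then have "c \<in> {0, 1, 2, 3}" by auto
    then show ?thesis
      unfolding coord_diff_iff coord_cube_elt_bit[OF \<open>c \<in> {0, 1, 2, 3}\<close>] of_bool_eq_iff D_def
      using 1 by auto
  next
    case 2
    have "tau j S \<noteq> tau j S' \<longleftrightarrow> D \<inter> tied j \<noteq> {}"
      unfolding tau_eq_iff[OF j] D_def by blast
    then show ?thesis
      using 2 D unfolding coord_diff_iff by (auto simp: coord_cube_elt)
  next
    case 3
    then show ?thesis
      using D unfolding coord_diff_iff by auto
  qed
qed

lemma diff_sets_cube:
  assumes j: "j < 3"
  shows "diff_sets (C_cube j) = {X. X \<subseteq> {0, 1, 2, 3, 4} \<and> (4 \<in> X \<longleftrightarrow> X \<inter> tied j \<noteq> {})}"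
proof (intro equalityI subsetI)
  fix X assume "X \<in> diff_sets (C_cube j)"
  then obtain S S' where S: "S \<subseteq> {0, 1, 2, 3}" "S' \<subseteq> {0, 1, 2, 3}"
    and X: "X = coord_diff (cube_elt j S) (cube_elt j S')"
    unfolding diff_sets_def C_cube_def by auto
  show "X \<in> {X. X \<subseteq> {0, 1, 2, 3, 4} \<and> (4 \<in> X \<longleftrightarrow> X \<inter> tied j \<noteq> {})}"
    using S tied_subset[OF j] unfolding X coord_diff_cube_elt[OF j S] by auto
next
  fix X assume X: "X \<in> {X. X \<subseteq> {0, 1, 2, 3, 4} \<and> (4 \<in> X \<longleftrightarrow> X \<inter> tied j \<noteq> {})}"
  then have "X - {4} \<subseteq> {0, 1, 2, 3}" by auto
  moreover have "X = coord_diff (cube_elt j {}) (cube_elt j (X - {4}))"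
    using X tied_subset[OF j] unfolding coord_diff_cube_elt[OF j empty_subsetI \<open>X - {4} \<subseteq> {0, 1, 2, 3}\<close>]
    by auto
  ultimately show "X \<in> diff_sets (C_cube j)"
    unfolding diff_sets_def C_cube_def by blast
qed

lemma T_sl_eq:
  assumes "j < 3"
  shows "T_sl j = {X. X \<subseteq> {0, 1, 2, 3, 4} \<and> (4 \<in> X \<longleftrightarrow> X \<inter> tied j \<noteq> {})}"
  using assms
proof (cases rule: less_3_cases)
  case 1
  show ?thesis unfolding 1 T_sl_def xi_gens_def tied_def by (simp, rule gen_sl_eqI) auto
next
  case 2
  show ?thesis unfolding 2 T_sl_def eta_gens_def tied_def by (simp, rule gen_sl_eqI) auto
next
  case 3
  show ?thesis unfolding 3 T_sl_def zeta_gens_def tied_def by (simp, rule gen_sl_eqI) auto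
qed

lemma coord_determined_U: "coord_determined {..<144}"
proof (rule coord_determined_product[OF U_sublattice_U order_refl])
  fix x c g :: nat assume x: "x \<in> {..<144}" and c: "c \<in> {..<5}" and g: "g \<in> lcarrier (factor c)"
  let ?z = "of_coords (\<lambda>c'. if c' = c then g else coord c' x)"
  have z: "coord c' ?z = (if c' = c then g else coord c' x)" if "c' < 5" for c'
    by (rule coord_of_coords[OF _ that]) (use g in \<open>auto simp: lcarrier_factor coord_def\<close>)
  have "?z \<in> {..<144}"
    using x g coord_in_factor by (auto intro!: of_coords_less)
  then show "\<exists>z\<in>{..<144}. coord c z = g \<and> (\<forall>c'\<in>{..<5} - {c}. coord c' z = coord c' x)"
    using z c by (intro bexI[of _ ?z]) auto
next
  fix x y :: nat assume "\<And>c. c \<in> {..<5} \<Longrightarrow> coord c x = coord c y"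
  then show "x = y" by (rule coord_eqI) simp
qed

lemma diff_sets_U: "diff_sets {..<144} = U_sl"
proof (intro equalityI subsetI)
  fix X assume "X \<in> diff_sets {..<144}"
  then show "X \<in> U_sl" unfolding diff_sets_def U_sl_def by (auto simp: coord_diff_iff)
next
  fix X assume "X \<in> U_sl"
  then have X: "X \<subseteq> {0, 1, 2, 3, 4}" unfolding U_sl_def by simp
  define v :: "nat \<Rightarrow> nat" where "v c = of_bool (c \<in> X)" for c
  have "coord c (of_coords v) = v c" if "c < 5" for c
    using coord_of_coords[OF _ that] by (simp add: v_def)
  then have "X = coord_diff 0 (of_coords v)"
    using X by (auto simp: coord_diff_iff v_def)
  moreover have "of_coords v \<in> {..<144}" "0 \<in> {..<144::nat}"
    by (auto simp: v_def lcarrier_factor intro!: of_coords_less)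
  ultimately show "X \<in> diff_sets {..<144}"
    unfolding diff_sets_def by blast
qed

lemma cube_elt_empty: "cube_elt j {} = 0"
  by (simp add: cube_elt_def tau_def of_coords_def)

lemma cube_elt_full: "j < 3 \<Longrightarrow> cube_elt j {0, 1, 2, 3} = U_top"
  by (erule less_3_cases) (simp_all add: cube_elt_def tau_def of_coords_def U_top_def)

lemma bounds_subset_cube: "j < 3 \<Longrightarrow> C_bounds \<subseteq> C_cube j"
  using cube_elt_empty cube_elt_full unfolding C_bounds_def C_cube_def by (metis Pow_bottom Pow_top empty_subsetI image_eqI insert_subset)

lemma chain_mid_in_cube:
  assumes "i < 3" "j < 3" "i \<noteq> j"
  shows "chain_mid i \<in> C_cube j"
proof -
  have "chain_mid i = cube_elt j ([{0, 1}, {1, 2}, {0, 2}] ! i)"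
    using assms(3)
    by (cases rule: less_3_cases[OF assms(1)]; cases rule: less_3_cases[OF assms(2)])
      (simp_all add: chain_mid_def cube_elt_def tau_def of_coords_def)
  moreover have "[{0, 1}, {1, 2}, {0, 2}] ! i \<subseteq> {0, 1, 2, 3::nat}"
    by (cases rule: less_3_cases[OF assms(1)]) auto
  ultimately show ?thesis unfolding C_cube_def by blast
qed

lemma chain_subset_cube: "i < 3 \<Longrightarrow> j < 3 \<Longrightarrow> i \<noteq> j \<Longrightarrow> C_chain i \<subseteq> C_cube j"
  using bounds_subset_cube chain_mid_in_cube unfolding C_chain_def C_bounds_def by blast

lemma subset3_cases:
  fixes p :: "nat set"
  assumes p: "p \<subseteq> {0, 1, 2}"
  obtains "p = {}" | "p = {0, 1, 2}" | i where "i < 3" "p = {i}" | j where "j < 3" "p = {0, 1, 2} - {j}"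
proof -
  have fin: "finite p" using p finite_subset by blast
  have "card p \<le> 3" using card_mono[OF _ p] by simp
  then consider "card p = 0" | "card p = 1" | "card p = 2" | "card p = 3" by linarith
  then show ?thesis
  proof cases
    case 1
    then have "p = {}" using fin by simp
    then show ?thesis by (rule that(1))
  next
    case 2
    then obtain i where i: "p = {i}" using card_1_singletonE by blast
    with p have "i < 3" by auto
    then show ?thesis using i by (rule that(3))
  next
    case 3
    have "card ({0, 1, 2} - p) = 1" using 3 p fin by (simp add: card_Diff_subset)
    then obtain j where j: "{0, 1, 2} - p = {j}" using card_1_singletonE by blast
    then have "j \<in> {0, 1, 2} - p" by simp
    then have "j < 3" by auto
    moreover have "p = {0, 1, 2} - {j}" using j p by blast
    ultimately show ?thesis by (rule that(4))
  next
    case 4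
    then have "p = {0, 1, 2}" using card_subset_eq[OF _ p] by simp
    then show ?thesis by (rule that(2))
  qed
qed

lemma vertex_shape_singleton:
  assumes "i < 3"
  shows "(if {i} = {} then a else if {i} = {0, 1, 2::nat} then b
          else if card {i} = 1 then f (the_elem {i}) else g (the_elem ({0, 1, 2} - {i}))) = f i"
proof -
  have "{i} \<noteq> {0, 1, 2::nat}"
  proof
    assume "{i} = {0, 1, 2::nat}"
    then have "0 \<in> {i}" "1 \<in> {i}" by simp_all
    then show False by simp
  qed
  moreover have "{i} \<noteq> {}" "card {i} = 1" "the_elem {i} = i" by simp_all
  ultimately show ?thesis by (simp only: if_False if_True refl)
qed

lemma vertex_shape_cosingleton:
  assumes "j < 3"
  defines "p \<equiv> {0, 1, 2::nat} - {j}"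
  shows "(if p = {} then a else if p = {0, 1, 2} then b
          else if card p = 1 then f (the_elem p) else g (the_elem ({0, 1, 2} - p))) = g j"
proof -
  have j: "j \<in> {0, 1, 2}" using assms(1) by auto
  then have "card p = 2" unfolding p_def by (simp add: card_Diff_singleton)
  moreover have "p \<noteq> {0, 1, 2}" using j unfolding p_def by blast
  moreover have "{0, 1, 2} - p = {j}" using j unfolding p_def by blast
  moreover have "p \<noteq> {}" using \<open>card p = 2\<close> by auto
  ultimately show ?thesis by (simp add: the_elem_eq)
qed

definition vertex_lattice :: "nat set \<Rightarrow> nat set" where
  "vertex_lattice p =
     (if p = {} then C_bounds
      else if p = {0, 1, 2} then {..<144}
      else if card p = 1 then C_chain (the_elem p)
      else C_cube (the_elem ({0, 1, 2} - p)))"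

lemma vertex_lattice_simps:
  "vertex_lattice {} = C_bounds" "vertex_lattice {0, 1, 2} = {..<144}"
  "i < 3 \<Longrightarrow> vertex_lattice {i} = C_chain i"
  "j < 3 \<Longrightarrow> vertex_lattice ({0, 1, 2} - {j}) = C_cube j"
  unfolding vertex_lattice_def by (simp, simp, erule vertex_shape_singleton, erule vertex_shape_cosingleton)

lemma Dc_simps:
  "Dc {} = two_sl" "Dc {0, 1, 2} = U_sl"
  "i < 3 \<Longrightarrow> Dc {i} = S_sl i"
  "j < 3 \<Longrightarrow> Dc ({0, 1, 2} - {j}) = T_sl j"
  unfolding Dc_def by (simp, simp, erule vertex_shape_singleton, erule vertex_shape_cosingleton)

lemma vertex_lattice_props:
  assumes "p \<subseteq> {0, 1, 2}"
  shows "U_sublattice (vertex_lattice p) \<and> coord_determined (vertex_lattice p) \<and>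
    diff_sets (vertex_lattice p) = Dc p"
  using assms
proof (cases rule: subset3_cases)
  case 1
  show ?thesis
    unfolding 1 vertex_lattice_simps(1) Dc_simps(1)
    using U_sublattice_bounds coord_determined_bounds diff_sets_bounds by blast
next
  case 2
  show ?thesis
    unfolding 2 vertex_lattice_simps(2) Dc_simps(2)
    using U_sublattice_U coord_determined_U diff_sets_U by blast
next
  case (3 i)
  show ?thesis
    unfolding 3(2) vertex_lattice_simps(3)[OF 3(1)] Dc_simps(3)[OF 3(1)]
    using U_sublattice_chain coord_determined_chain diff_sets_chain 3(1) by blast
next
  case (4 j)
  show ?thesis
    unfolding 4(2) vertex_lattice_simps(4)[OF 4(1)] Dc_simps(4)[OF 4(1)] T_sl_eq[OF 4(1)]
    using U_sublattice_cube coord_determined_cube diff_sets_cube 4(1) by blast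
qed

lemma Dc_Un:
  assumes "p \<subseteq> {0, 1, 2}" "A \<in> Dc p" "B \<in> Dc p"
  shows "A \<union> B \<in> Dc p"
  using assms(1)
proof (cases rule: subset3_cases)
  case 1
  then show ?thesis using assms(2,3) unfolding 1 Dc_simps(1) two_sl_def by auto
next
  case 2
  then show ?thesis using assms(2,3) unfolding 2 Dc_simps(2) U_sl_def by auto
next
  case (3 i)
  then show ?thesis using assms(2,3) gen_sl_Un unfolding 3(2) Dc_simps(3)[OF 3(1)] S_sl_def by blast
next
  case (4 j)
  then show ?thesis using assms(2,3) gen_sl_Un unfolding 4(2) Dc_simps(4)[OF 4(1)] T_sl_def by blast
qed

lemma bounds_subset_vertex_lattice:
  assumes "q \<subseteq> {0, 1, 2}"
  shows "C_bounds \<subseteq> vertex_lattice q"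
  using assms
proof (cases rule: subset3_cases)
  case 2
  show ?thesis
    unfolding 2 vertex_lattice_simps(2) using U_sublattice_bounds unfolding U_sublattice_def by auto
next
  case (3 i)
  show ?thesis
    unfolding 3(2) vertex_lattice_simps(3)[OF 3(1)] C_chain_def C_bounds_def by auto
next
  case (4 j)
  show ?thesis
    unfolding 4(2) vertex_lattice_simps(4)[OF 4(1)] by (rule bounds_subset_cube[OF 4(1)])
qed (simp add: vertex_lattice_simps(1))

lemma vertex_lattice_mono:
  assumes pq: "p \<subseteq> q" and q: "q \<subseteq> {0, 1, 2}"
  shows "vertex_lattice p \<subseteq> vertex_lattice q"
proof (cases "p = {}")
  case True
  then show ?thesis using bounds_subset_vertex_lattice[OF q] vertex_lattice_simps(1) by simp
next
  case False
  have p: "p \<subseteq> {0, 1, 2}" using pq q by blast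
  from q show ?thesis
  proof (cases rule: subset3_cases)
    case 2
    then show ?thesis
      using vertex_lattice_props[OF p] vertex_lattice_simps(2) unfolding U_sublattice_def by auto
  next
    case (3 i)
    then have "p = q" using pq False by (auto dest: subset_singletonD)
    then show ?thesis by simp
  next
    case (4 j)
    from p show ?thesis
    proof (cases rule: subset3_cases)
      case 2
      have "j \<in> p" using 2 4(1) by auto
      moreover have "j \<notin> q" using 4(2) by simp
      ultimately show ?thesis using pq by blast
    next
      case (3 i)
      have "i \<in> q" using 3(2) pq by blast
      then have "i \<noteq> j" using 4(2) by simp
      then show ?thesis
        unfolding 4(2) 3(2) vertex_lattice_simps(4)[OF 4(1)] vertex_lattice_simps(3)[OF 3(1)]
        using chain_subset_cube 3(1) 4(1) by blast
    next
      case (4 j')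
      have "j \<notin> p" using pq \<open>q = {0, 1, 2} - {j}\<close> by blast
      moreover have "j \<in> {0, 1, 2}" using \<open>j < 3\<close> by auto
      ultimately have "j' = j" using \<open>p = {0, 1, 2} - {j'}\<close> by blast
      then show ?thesis using \<open>p = {0, 1, 2} - {j'}\<close> \<open>q = {0, 1, 2} - {j}\<close> by simp
    qed (use False in simp)
  qed (use pq False in simp)
qed

lemma lattice_embedding_inclusion:
  "C \<subseteq> C' \<Longrightarrow> lattice_embedding (lattice_on C) (lattice_on C') (\<lambda>x. x)"
  unfolding lattice_embedding_def lattice_hom_def by auto

lemma lattice_diagram_inclusions:
  assumes "\<And>p. p \<subseteq> {0, 1, 2} \<Longrightarrow> U_sublattice (C p)"
    and "\<And>p q. p \<subseteq> q \<Longrightarrow> q \<subseteq> {0, 1, 2} \<Longrightarrow> C p \<subseteq> C q"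
  shows "lattice_diagram (\<lambda>p. lattice_on (C p)) (\<lambda>p q x. x)"
  unfolding lattice_diagram_def
proof (intro conjI allI impI ballI refl)
  show "is_lattice (lattice_on (C p))" if "p \<subseteq> {0, 1, 2}" for p
    using is_lattice_on assms(1) that by blast
  show "lattice_hom (lattice_on (C p)) (lattice_on (C q)) (\<lambda>x. x)" if "p \<subseteq> q \<and> q \<subseteq> {0, 1, 2}" for p q
    using lattice_embedding_inclusion[OF assms(2)] that unfolding lattice_embedding_def by blast
qed

lemma lifts_Dc_inclusions:
  assumes vertex: "\<And>p. p \<subseteq> {0, 1, 2} \<Longrightarrow>
      U_sublattice (C p) \<and> coord_determined (C p) \<and> diff_sets (C p) = Dc p"
    and closed: "\<And>p A B. p \<subseteq> {0, 1, 2} \<Longrightarrow> A \<in> Dc p \<Longrightarrow> B \<in> Dc p \<Longrightarrow> A \<union> B \<in> Dc p"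
    and mono: "\<And>p q. p \<subseteq> q \<Longrightarrow> q \<subseteq> {0, 1, 2} \<Longrightarrow> C p \<subseteq> C q"
  shows "lifts_Dc (\<lambda>p. lattice_on (C p)) (\<lambda>p q x. x)"
  unfolding lifts_Dc_def
proof (intro exI[of _ "\<lambda>p. coord_support"] conjI allI impI ballI)
  fix p :: "nat set" assume p: "p \<subseteq> {0, 1, 2}"
  have C: "U_sublattice (C p)" and det: "coord_determined (C p)" and diffs: "diff_sets (C p) = Dc p"
    using vertex[OF p] by auto
  show "bij_betw coord_support (Con_c (lattice_on (C p))) (Dc p)"
    using coord_support_bij[OF C det] closed[OF p] unfolding diffs by blast
  show "coord_support (con_zero (lattice_on (C p))) = {}"
    by (auto simp: coord_support_def con_zero_def)
  fix \<alpha> \<beta> assume "\<alpha> \<in> Con_c (lattice_on (C p))" "\<beta> \<in> Con_c (lattice_on (C p))"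
  then have "\<alpha> \<subseteq> C p \<times> C p" "\<beta> \<subseteq> C p \<times> C p"
    using lcongruenceD(1)[OF lcongruence_Con_c[OF C]] by simp_all
  then have "\<alpha> \<union> \<beta> \<subseteq> C p \<times> C p" by (rule Un_least)
  then have "coord_support (Cg (lattice_on (C p)) (\<alpha> \<union> \<beta>)) = coord_support (\<alpha> \<union> \<beta>)"
    by (rule coord_support_Cg[OF C])
  then show "coord_support (con_join (lattice_on (C p)) \<alpha> \<beta>) = coord_support \<alpha> \<union> coord_support \<beta>"
    unfolding con_join_def by (simp add: coord_support_def)
next
  fix p q :: "nat set" and \<alpha> assume pq: "p \<subseteq> q \<and> q \<subseteq> {0, 1, 2}" and \<alpha>: "\<alpha> \<in> Con_c (lattice_on (C p))"
  have p: "p \<subseteq> {0, 1, 2}" and q: "q \<subseteq> {0, 1, 2}" using pq by auto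
  have "\<alpha> \<subseteq> C p \<times> C p"
    using lcongruenceD(1)[OF lcongruence_Con_c[OF _ \<alpha>]] vertex[OF p] by simp
  moreover have "C p \<subseteq> C q" using mono pq by blast
  ultimately have "\<alpha> \<subseteq> C q \<times> C q" by blast
  then have "coord_support (Cg (lattice_on (C q)) \<alpha>) = coord_support \<alpha>"
    using coord_support_Cg vertex[OF q] by simp
  then show "coord_support (Con_c_map (lattice_on (C q)) (\<lambda>x. x) \<alpha>) = coord_support \<alpha>"
    unfolding Con_c_map_def by simp
qed

theorem theorem6p1:
  "\<exists>(L :: nat set \<Rightarrow> nat latt) (f :: nat set \<Rightarrow> nat set \<Rightarrow> nat \<Rightarrow> nat).
     lattice_diagram L f \<and>
     (\<forall>p. p \<subseteq> {0,1,2} \<longrightarrow> finite (lcarrier (L p))) \<and>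
     (\<forall>p q. p \<subseteq> q \<and> q \<subseteq> {0,1,2} \<longrightarrow> lattice_embedding (L p) (L q) (f p q)) \<and>
     lifts_Dc L f"
proof (intro exI conjI allI impI)
  show "lattice_diagram (\<lambda>p. lattice_on (vertex_lattice p)) (\<lambda>p q x. x)"
    by (rule lattice_diagram_inclusions[OF conjunct1[OF vertex_lattice_props] vertex_lattice_mono])
  show "lifts_Dc (\<lambda>p. lattice_on (vertex_lattice p)) (\<lambda>p q x. x)"
    by (rule lifts_Dc_inclusions[OF vertex_lattice_props Dc_Un vertex_lattice_mono])
  fix p :: "nat set"
  assume "p \<subseteq> {0, 1, 2}"
  then have "vertex_lattice p \<subseteq> {..<144}"
    using vertex_lattice_props unfolding U_sublattice_def by blast
  then show "finite (lcarrier (lattice_on (vertex_lattice p)))"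
    using finite_subset by auto
next
  fix p q :: "nat set"
  assume "p \<subseteq> q \<and> q \<subseteq> {0, 1, 2}"
  then show "lattice_embedding (lattice_on (vertex_lattice p)) (lattice_on (vertex_lattice q)) (\<lambda>x. x)"
    by (intro lattice_embedding_inclusion vertex_lattice_mono) auto
qed

end
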